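(* For every integer $n\ge 4$ and every prime power $q$, $$f(n,q)\ge (q^{n+1}-1)(q^n-1)\cdot\frac{q^4+2q^2+q+1}{(q^5-1)(q^4-1)}.$$ In particular, for every $n\ge 5$ and every prime power $q$, $f(n,q)\ge q^{2n-4}+2q^{2n-6}+q^{2n-7}+2q^{2n-8}$.
   Context: $\mathrm{PG}(n,q)$ denotes the $n$-dimensional projective space over $\mathbb F_q$. A $(2,1)$-blocking set in $\mathrm{PG}(n,q)$ is a set $\mathcal B$ of lines such that every plane of $\mathrm{PG}(n,q)$ contains at least one line of $\mathcal B$. For $n\ge -1$, $f(n,q)$ denotes the smallest possible size of a $(2,1)$-blocking set in $\mathrm{PG}(n,q)$. *)

theory Defs
  imports Complex_Main
begin

text \<open>The ambient vector space V(n+1,F) underlying PG(n,F) is modelled as the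
functions nat \<Rightarrow> F vanishing outside the coordinates 0..n.\<close>

definition lin_comb :: "(nat \<Rightarrow> nat \<Rightarrow> 'a::field) \<Rightarrow> nat \<Rightarrow> (nat \<Rightarrow> 'a) \<Rightarrow> (nat \<Rightarrow> 'a)" where
  "lin_comb v k c = (\<lambda>j. \<Sum>i<k. c i * v i j)"

text \<open>The (k-1)-dimensional projective subspaces of PG(n,F), i.e. the k-dimensional
vector subspaces of F^(n+1), each given as the span of k linearly independent vectors.\<close>

definition proj_subspaces :: "'a::field itself \<Rightarrow> nat \<Rightarrow> nat \<Rightarrow> (nat \<Rightarrow> 'a) set set" where
  "proj_subspaces _ n k =
     {S. \<exists>v :: nat \<Rightarrow> nat \<Rightarrow> 'a.
          (\<forall>i<k. \<forall>j. n < j \<longrightarrow> v i j = 0) \<and>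
          (\<forall>c. lin_comb v k c = (\<lambda>_. 0) \<longrightarrow> (\<forall>i<k. c i = 0)) \<and>
          S = range (lin_comb v k)}"

abbreviation PG_lines :: "'a::field itself \<Rightarrow> nat \<Rightarrow> (nat \<Rightarrow> 'a) set set" where
  "PG_lines F n \<equiv> proj_subspaces F n 2"

abbreviation PG_planes :: "'a::field itself \<Rightarrow> nat \<Rightarrow> (nat \<Rightarrow> 'a) set set" where
  "PG_planes F n \<equiv> proj_subspaces F n 3"

definition blocking_21 :: "'a::field itself \<Rightarrow> nat \<Rightarrow> (nat \<Rightarrow> 'a) set set \<Rightarrow> bool" where
  "blocking_21 F n B \<longleftrightarrow> B \<subseteq> PG_lines F n \<and> (\<forall>P \<in> PG_planes F n. \<exists>L\<in>B. L \<subseteq> P)"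

definition f_21 :: "'a::field itself \<Rightarrow> nat \<Rightarrow> nat" where
  "f_21 F n = Inf {card B | B. blocking_21 F n B}"

end

theory Submission
  imports Defs "HOL-Library.Function_Algebras" "HOL-Library.Set_Algebras"
    "HOL-Library.FuncSet" "HOL-Library.Cardinality"
begin

text \<open>
  Every line of PG(n,q) lies in the same number of 4-spaces, so double counting incidences between
  a (2,1)-blocking set and the 4-spaces of PG(n,q) reduces the bound to f(4,q) \<ge> q^4 + 2q^2 + q + 1;
  the factor (q^(n+1) - 1)(q^n - 1) / ((q^5 - 1)(q^4 - 1)) is the ratio of the number of
  4-spaces to the number of 4-spaces through a line.

  In PG(4,q) every solid contains at least q^2 + 1 lines of the blocking set B, since each of
  its (q^2 + 1)(q + 1) planes contains one and each line lies in q + 1 of them. If every solid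
  contains at least q^2 + 2, counting pairs (line, solid) gives the bound. Otherwise some solid S
  contains exactly q^2 + 1 lines of B, every plane of S contains exactly one of them, and they
  form a line spread of S. Each remaining line of B meets S in a point; counting them through the
  points, the nonspread lines and the spread lines of S, keeping track of the excess of planes
  containing several lines of B, shows that there are at least q^4 + q^2 + q of them.

  Subspaces are vector subspaces of nat \<Rightarrow> F, so a projective k-space has dimension k + 1.
\<close>

section \<open>Subspaces over a finite field\<close>

definition smul :: "'a::field \<Rightarrow> (nat \<Rightarrow> 'a) \<Rightarrow> (nat \<Rightarrow> 'a)" where
  "smul c x = (\<lambda>j. c * x j)"

definition is_subspace :: "(nat \<Rightarrow> 'a::field) set \<Rightarrow> bool" where
  "is_subspace X \<longleftrightarrow> 0 \<in> X \<and> (\<forall>x\<in>X. \<forall>y\<in>X. x + y \<in> X) \<and> (\<forall>c. \<forall>x\<in>X. smul c x \<in> X)"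

text \<open>Over a field with q elements a subspace of dimension k has exactly q^k vectors;
  this is taken as the definition of dimension.\<close>

definition has_dim :: "(nat \<Rightarrow> 'a::{finite,field}) set \<Rightarrow> nat \<Rightarrow> bool" where
  "has_dim X k \<longleftrightarrow> is_subspace X \<and> finite X \<and> card X = CARD('a) ^ k"

definition between :: "(nat \<Rightarrow> 'a::{finite,field}) set \<Rightarrow> (nat \<Rightarrow> 'a) set \<Rightarrow> nat \<Rightarrow> (nat \<Rightarrow> 'a) set set" where
  "between U A k = {X. has_dim X k \<and> U \<subseteq> X \<and> X \<subseteq> A}"

abbreviation points_of :: "(nat \<Rightarrow> 'a::{finite,field}) set \<Rightarrow> (nat \<Rightarrow> 'a) set set" where
  "points_of A \<equiv> between {0} A 1"

abbreviation lines_of :: "(nat \<Rightarrow> 'a::{finite,field}) set \<Rightarrow> (nat \<Rightarrow> 'a) set set" where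
  "lines_of A \<equiv> between {0} A 2"

abbreviation planes_of :: "(nat \<Rightarrow> 'a::{finite,field}) set \<Rightarrow> (nat \<Rightarrow> 'a) set set" where
  "planes_of A \<equiv> between {0} A 3"

abbreviation solids_of :: "(nat \<Rightarrow> 'a::{finite,field}) set \<Rightarrow> (nat \<Rightarrow> 'a) set set" where
  "solids_of A \<equiv> between {0} A 4"

definition span1 :: "(nat \<Rightarrow> 'a::field) \<Rightarrow> (nat \<Rightarrow> 'a) set" where
  "span1 w = range (\<lambda>c. smul c w)"

lemma smul_apply [simp]: "smul c x j = c * x j"
  by (simp add: smul_def)

lemma smul_inverse_cancel: "c \<noteq> 0 \<Longrightarrow> smul (inverse c) (smul c w) = w"
  by (simp add: fun_eq_iff)

lemma is_subspaceD:
  assumes "is_subspace X"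
  shows "0 \<in> X" "x \<in> X \<Longrightarrow> y \<in> X \<Longrightarrow> x + y \<in> X" "x \<in> X \<Longrightarrow> smul c x \<in> X"
  using assms by (auto simp: is_subspace_def)

lemma is_subspace_diff:
  assumes "is_subspace X" "x \<in> X" "y \<in> X"
  shows "x - y \<in> X"
proof -
  have "x - y = x + smul (-1) y" by (simp add: fun_eq_iff)
  then show ?thesis using assms is_subspaceD(2,3) by metis
qed

lemma is_subspace_Int: "is_subspace X \<Longrightarrow> is_subspace Y \<Longrightarrow> is_subspace (X \<inter> Y)"
  by (auto simp: is_subspace_def)

lemma is_subspace_plus:
  assumes "is_subspace X" "is_subspace Y"
  shows "is_subspace (X + Y)"
  unfolding is_subspace_def
proof (intro conjI ballI allI)
  show "0 \<in> X + Y" using set_plus_intro[of 0 X 0 Y] assms is_subspaceD(1) by fastforce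
next
  fix a b assume "a \<in> X + Y" "b \<in> X + Y"
  then obtain x y x' y' where "x \<in> X" "y \<in> Y" "x' \<in> X" "y' \<in> Y" "a = x + y" "b = x' + y'"
    by (meson set_plus_elim)
  moreover have "a + b = (x + x') + (y + y')" if "a = x + y" "b = x' + y'"
    using that by (simp add: algebra_simps)
  ultimately show "a + b \<in> X + Y" using assms is_subspaceD(2) by (metis set_plus_intro)
next
  fix c a assume "a \<in> X + Y"
  then obtain x y where "x \<in> X" "y \<in> Y" "a = x + y" by (meson set_plus_elim)
  moreover have "smul c (x + y) = smul c x + smul c y" by (simp add: fun_eq_iff algebra_simps)
  ultimately show "smul c a \<in> X + Y" using assms is_subspaceD(3) by (metis set_plus_intro)
qed

lemma subset_plus_left: "is_subspace Y \<Longrightarrow> X \<subseteq> X + Y"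
  using set_zero_plus2[of Y X] is_subspaceD(1) by (metis add.commute)

lemma subset_plus_right: "is_subspace X \<Longrightarrow> Y \<subseteq> X + Y"
  using set_zero_plus2 is_subspaceD(1) by metis

lemma plus_subset_subspace:
  assumes "is_subspace A" "X \<subseteq> A" "Y \<subseteq> A"
  shows "X + Y \<subseteq> A"
  using assms is_subspaceD(2)[OF assms(1)] by (auto elim!: set_plus_elim)

text \<open>Each vector of X + Y has exactly |X \<inter> Y| decompositions x + y.\<close>

lemma card_plus_mult_card_Int:
  assumes "is_subspace X" "is_subspace Y" "finite X" "finite Y"
  shows "card (X + Y) * card (X \<inter> Y) = card X * card Y"
proof -
  let ?f = "\<lambda>p::(nat \<Rightarrow> 'a) \<times> (nat \<Rightarrow> 'a). fst p + snd p"
  have fin: "finite (X \<times> Y)" using assms by simp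
  have fibre: "card {p \<in> X \<times> Y. ?f p = z} = card (X \<inter> Y)" if "z \<in> X + Y" for z
  proof -
    obtain x0 y0 where z: "x0 \<in> X" "y0 \<in> Y" "z = x0 + y0"
      using \<open>z \<in> X + Y\<close> by (meson set_plus_elim)
    have "bij_betw (\<lambda>d. (x0 + d, y0 - d)) (X \<inter> Y) {p \<in> X \<times> Y. ?f p = z}"
    proof (rule bij_betwI[where g = "\<lambda>p. fst p - x0"])
      show "(\<lambda>d. (x0 + d, y0 - d)) \<in> X \<inter> Y \<rightarrow> {p \<in> X \<times> Y. ?f p = z}"
        using z assms by (auto intro: is_subspaceD is_subspace_diff)
      show "(\<lambda>p. fst p - x0) \<in> {p \<in> X \<times> Y. ?f p = z} \<rightarrow> X \<inter> Y"
      proof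
        fix p assume p: "p \<in> {p \<in> X \<times> Y. ?f p = z}"
        then have "fst p - x0 = y0 - snd p" using z by (auto simp: algebra_simps)
        moreover have "fst p - x0 \<in> X" "y0 - snd p \<in> Y"
          using p z assms by (auto intro: is_subspace_diff)
        ultimately show "fst p - x0 \<in> X \<inter> Y" by simp
      qed
    qed (use z in \<open>auto simp: algebra_simps prod_eq_iff\<close>)
    then show ?thesis by (simp add: bij_betw_same_card)
  qed
  have "card (X \<times> Y) = (\<Sum>z\<in>?f ` (X \<times> Y). card {p \<in> X \<times> Y. ?f p = z})"
    using card_eq_sum[of "X \<times> Y"] sum.image_gen[OF fin, of "\<lambda>_. 1::nat" ?f] by simp
  also have "?f ` (X \<times> Y) = X + Y"
    unfolding set_plus_def by force
  also have "(\<Sum>z\<in>X + Y. card {p \<in> X \<times> Y. ?f p = z}) = card (X + Y) * card (X \<inter> Y)"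
    using fibre by simp
  finally show ?thesis by (simp add: card_cartesian_product)
qed

lemma is_subspace_span1: "is_subspace (span1 w)"
  unfolding is_subspace_def span1_def
proof (intro conjI ballI allI)
  show "0 \<in> range (\<lambda>c. smul c w)" by (rule range_eqI[of _ _ 0]) (simp add: fun_eq_iff)
next
  fix x y assume "x \<in> range (\<lambda>c. smul c w)" "y \<in> range (\<lambda>c. smul c w)"
  then obtain c d where "x = smul c w" "y = smul d w" by blast
  then have "x + y = smul (c + d) w" by (simp add: fun_eq_iff algebra_simps)
  then show "x + y \<in> range (\<lambda>c. smul c w)" by blast
next
  fix c x assume "x \<in> range (\<lambda>c. smul c w)"
  then obtain d where "x = smul d w" by blast
  then have "smul c x = smul (c * d) w" by (simp add: fun_eq_iff)
  then show "smul c x \<in> range (\<lambda>c. smul c w)" by blast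
qed

lemma self_in_span1: "w \<in> span1 w"
  unfolding span1_def by (rule range_eqI[of _ _ 1]) (simp add: fun_eq_iff)

lemma span1_subset: "is_subspace A \<Longrightarrow> w \<in> A \<Longrightarrow> span1 w \<subseteq> A"
  by (auto simp: span1_def intro: is_subspaceD(3))

lemma card_span1:
  fixes w :: "nat \<Rightarrow> 'a::{finite,field}"
  assumes "w \<notin> X" "is_subspace X"
  shows "card (span1 w) = CARD('a)"
proof -
  have "w \<noteq> 0" using assms is_subspaceD(1) by blast
  then obtain j where "w j \<noteq> 0" by (auto simp: fun_eq_iff)
  then have "inj (\<lambda>c::'a. smul c w)" by (auto intro!: injI simp: fun_eq_iff)
  then show ?thesis by (simp add: span1_def card_image)
qed

lemma span1_Int:
  assumes "w \<notin> X" "is_subspace X"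
  shows "X \<inter> span1 w = {0}"
proof -
  have scalar_zero: "c = 0" if "smul c w \<in> X" for c
  proof (rule ccontr)
    assume "c \<noteq> 0"
    then have "w = smul (inverse c) (smul c w)" by (simp add: smul_inverse_cancel)
    then show False using that assms is_subspaceD(3) by metis
  qed
  have "x = 0" if x: "x \<in> X" "x \<in> span1 w" for x
  proof -
    obtain c where "x = smul c w" using x(2) by (auto simp: span1_def)
    moreover have "c = 0" using scalar_zero x(1) calculation by blast
    ultimately show ?thesis by (simp add: fun_eq_iff)
  qed
  moreover have "0 \<in> X \<inter> span1 w"
    using is_subspaceD(1)[OF assms(2)] is_subspaceD(1)[OF is_subspace_span1] by blast
  ultimately show ?thesis by blast
qed

lemma one_less_card_field: "1 < CARD('a::{finite,field})"
proof -
  have "card {0::'a, 1} \<le> CARD('a)" by (rule card_mono) auto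
  then show ?thesis by simp
qed

lemma has_dim_plus_span1:
  assumes X: "has_dim X k" and w: "w \<notin> X"
  shows "has_dim (X + span1 w) (Suc k)"
proof -
  have X': "is_subspace X" "finite X" using X by (auto simp: has_dim_def)
  have "finite (span1 w)" by (simp add: span1_def)
  then have "card (X + span1 w) * 1 = card X * CARD('a)"
    using card_plus_mult_card_Int[OF X'(1) is_subspace_span1 X'(2) \<open>finite (span1 w)\<close>] span1_Int[OF w X'(1)]
      card_span1[OF w X'(1)] by simp
  then show ?thesis
    using X X' \<open>finite (span1 w)\<close> is_subspace_plus[OF X'(1) is_subspace_span1]
    by (simp add: has_dim_def finite_set_plus)
qed

lemma has_dim_zero: "has_dim {0 :: nat \<Rightarrow> 'a::{finite,field}} 0"
  by (simp add: has_dim_def is_subspace_def fun_eq_iff)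

lemma has_dim_imp_zero: "has_dim X k \<Longrightarrow> 0 \<in> X"
  by (simp add: has_dim_def is_subspaceD(1))

lemma has_dim_exists:
  fixes A :: "(nat \<Rightarrow> 'a::{finite,field}) set"
  assumes A: "is_subspace A" "finite A"
  shows "\<exists>k. has_dim A k"
proof -
  have "\<exists>k. has_dim A k" if "has_dim X j" "X \<subseteq> A" for X j
    using that
  proof (induction "card A - card X" arbitrary: X j rule: less_induct)
    case less
    show ?case
    proof (cases "X = A")
      case True
      then show ?thesis using less.prems by blast
    next
      case False
      then obtain w where w: "w \<in> A" "w \<notin> X" using less.prems by blast
      let ?Y = "X + span1 w"
      have Y: "has_dim ?Y (Suc j)" using has_dim_plus_span1[OF less.prems(1) w(2)] .
      have YA: "?Y \<subseteq> A"
        using less.prems A(1) w(1) by (intro plus_subset_subspace span1_subset) (auto simp: has_dim_def)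
      have "CARD('a) ^ j < CARD('a) ^ Suc j" using one_less_card_field by simp
      then have "card X < card ?Y" using Y less.prems(1) by (simp add: has_dim_def)
      moreover have "card ?Y \<le> card A" using card_mono[OF A(2) YA] .
      ultimately have "card A - card ?Y < card A - card X" by linarith
      then show ?thesis using less.hyps Y YA by blast
    qed
  qed
  then show ?thesis using has_dim_zero A(1) is_subspaceD(1) by blast
qed

lemma has_dim_mono:
  assumes "has_dim X j" "has_dim Y k" "X \<subseteq> Y"
  shows "j \<le> k"
proof -
  have "CARD('a) ^ j \<le> CARD('a) ^ k"
    using assms card_mono[of Y X] by (simp add: has_dim_def)
  then show ?thesis using power_le_imp_le_exp one_less_card_field by blast
qed

lemma has_dim_subset_eq:
  assumes "has_dim X k" "has_dim Y k" "X \<subseteq> Y"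
  shows "X = Y"
  using assms card_subset_eq[of Y X] by (simp add: has_dim_def)

lemma has_dim_psubset:
  assumes "has_dim X j" "has_dim Y k" "X \<subset> Y"
  shows "j < k"
  using has_dim_mono[of X j Y k] has_dim_subset_eq[of X j Y] assms by fastforce

lemma has_dim_Int:
  assumes "has_dim X a" "has_dim Y b"
  obtains c where "has_dim (X \<inter> Y) c"
  using assms has_dim_exists[of "X \<inter> Y"] is_subspace_Int by (auto simp: has_dim_def)

lemma has_dim_plus:
  assumes X: "has_dim X a" and Y: "has_dim Y b" and XY: "has_dim (X \<inter> Y) c"
  shows "has_dim (X + Y) (a + b - c)"
proof -
  have "is_subspace (X + Y)" "finite (X + Y)"
    using X Y by (auto simp: has_dim_def intro: is_subspace_plus finite_set_plus)
  then obtain d where d: "has_dim (X + Y) d" using has_dim_exists by blast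
  have "card (X + Y) * card (X \<inter> Y) = card X * card Y"
    using X Y card_plus_mult_card_Int[of X Y] by (simp add: has_dim_def)
  then have "CARD('a) ^ (d + c) = CARD('a) ^ (a + b)"
    using X Y XY d by (simp add: has_dim_def power_add)
  then have "d = a + b - c" using power_inject_exp one_less_card_field by (metis diff_add_inverse2)
  then show ?thesis using d by simp
qed

lemma finite_between: "finite A \<Longrightarrow> finite (between U A k)"
  by (rule finite_subset[of _ "Pow A"]) (auto simp: between_def)

lemma mem_between_zero: "X \<in> between {0} A k \<longleftrightarrow> has_dim X k \<and> X \<subseteq> A"
  using has_dim_imp_zero[of X k] by (auto simp: between_def)

lemma has_dim_subspace: "has_dim X k \<Longrightarrow> is_subspace X"
  by (simp add: has_dim_def)

lemma has_dim_finite: "has_dim X k \<Longrightarrow> finite X"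
  by (simp add: has_dim_def)

lemma subspace_eq_plus:
  assumes "has_dim (X + Y) k" "has_dim Z k" "X \<subseteq> Z" "Y \<subseteq> Z"
  shows "Z = X + Y"
  using has_dim_subset_eq[OF assms(1,2)] plus_subset_subspace[OF has_dim_subspace[OF assms(2)] assms(3,4)]
  by simp

lemma has_dim_plus_points:
  assumes P: "has_dim P 1" and Q: "has_dim Q 1" and "P \<noteq> Q"
  shows "has_dim (P + Q) 2"
proof -
  obtain c where c: "has_dim (P \<inter> Q) c" using has_dim_Int[OF P Q] .
  have "c \<le> 1" using has_dim_mono[OF c P] by blast
  moreover have "c \<noteq> 1"
  proof
    assume "c = 1"
    then have "P \<inter> Q = P" "P \<inter> Q = Q" using has_dim_subset_eq[of "P \<inter> Q" 1] c P Q by auto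
    then show False using \<open>P \<noteq> Q\<close> by simp
  qed
  ultimately have "c = 0" by simp
  then show ?thesis using has_dim_plus[OF P Q c] by (simp add: numeral_2_eq_2)
qed

lemma has_dim_Int_hyperplane:
  assumes W: "has_dim W (Suc k)" and S: "has_dim S k" "S \<subseteq> W"
    and X: "has_dim X (Suc d)" "X \<subseteq> W" "\<not> X \<subseteq> S"
  shows "has_dim (X \<inter> S) d"
proof -
  obtain c where c: "has_dim (X \<inter> S) c" using has_dim_Int[OF X(1) S(1)] .
  have sum: "has_dim (X + S) (Suc d + k - c)" using has_dim_plus[OF X(1) S(1) c] .
  have "S \<subset> X + S" using subset_plus_right[OF has_dim_subspace[OF X(1)]] X(3)
    subset_plus_left[OF has_dim_subspace[OF S(1)], of X] by blast
  then have "k < Suc d + k - c" using has_dim_psubset[OF S(1) sum] by blast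
  moreover have "X + S \<subseteq> W"
    using plus_subset_subspace[OF has_dim_subspace[OF W] X(2) S(2)] .
  then have "Suc d + k - c \<le> Suc k" using has_dim_mono[OF sum W] by blast
  moreover have "c \<le> Suc d" using has_dim_mono[OF c X(1)] by blast
  ultimately have "c = d" by linarith
  then show ?thesis using c by simp
qed

lemma line_through_points:
  assumes P: "P \<in> points_of A" and Q: "Q \<in> points_of A" and "P \<noteq> Q" and A: "is_subspace A"
  shows "P + Q \<in> lines_of A" "P \<subseteq> P + Q" "Q \<subseteq> P + Q"
proof -
  have P1: "has_dim P 1" "P \<subseteq> A" and Q1: "has_dim Q 1" "Q \<subseteq> A"
    using P Q by (auto simp: mem_between_zero)
  show "P \<subseteq> P + Q" using subset_plus_left[OF has_dim_subspace[OF Q1(1)]] .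
  show "Q \<subseteq> P + Q" using subset_plus_right[OF has_dim_subspace[OF P1(1)]] .
  show "P + Q \<in> lines_of A"
    using has_dim_plus_points[OF P1(1) Q1(1) \<open>P \<noteq> Q\<close>] plus_subset_subspace[OF A P1(2) Q1(2)]
    by (simp add: mem_between_zero)
qed

section \<open>Counting subspaces\<close>

lemma sum_card_filter_swap:
  assumes "finite A" "finite B"
  shows "(\<Sum>x\<in>A. card {y \<in> B. R x y}) = (\<Sum>y\<in>B. card {x \<in> A. R x y})"
  using sum.swap_restrict[OF assms, of "\<lambda>_ _. 1::nat" R] by simp

lemma between_self: "has_dim U k \<Longrightarrow> U \<subseteq> A \<Longrightarrow> between U A k = {U}"
  using has_dim_subset_eq[of U k] by (auto simp: between_def)

text \<open>Each w \<in> A - X lies in exactly one (k+1)-space between X and A, namely X + span1 w.\<close>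

lemma card_between_Suc:
  fixes X :: "(nat \<Rightarrow> 'a::{finite,field}) set"
  assumes X: "has_dim X k" and A: "has_dim A a" and XA: "X \<subseteq> A"
  shows "card (between X A (Suc k)) * (CARD('a) ^ Suc k - CARD('a) ^ k) = CARD('a) ^ a - CARD('a) ^ k"
proof -
  let ?I = "between X A (Suc k)"
  have finA: "finite A" "is_subspace A" and subX: "is_subspace X"
    using A X by (auto simp: has_dim_def)
  have unique: "Y = X + span1 w" if "Y \<in> ?I" "w \<in> Y" "w \<notin> X" for Y w
  proof -
    have "X + span1 w \<subseteq> Y"
      using that by (intro plus_subset_subspace span1_subset) (auto simp: between_def has_dim_def)
    moreover have "has_dim Y (Suc k)" using that(1) by (simp add: between_def)
    ultimately have "X + span1 w = Y" using has_dim_subset_eq[OF has_dim_plus_span1[OF X that(3)]] by blast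
    then show ?thesis by simp
  qed
  have cover: "A - X = (\<Union>Y\<in>?I. Y - X)"
  proof
    show "A - X \<subseteq> (\<Union>Y\<in>?I. Y - X)"
    proof
      fix w assume w: "w \<in> A - X"
      have "X \<subseteq> X + span1 w" by (rule subset_plus_left[OF is_subspace_span1])
      moreover have "X + span1 w \<subseteq> A"
        using w XA finA by (intro plus_subset_subspace span1_subset) auto
      ultimately have "X + span1 w \<in> ?I"
        using has_dim_plus_span1[OF X] w by (simp add: between_def)
      moreover have "w \<in> X + span1 w" using subset_plus_right[OF subX] self_in_span1 by blast
      ultimately show "w \<in> (\<Union>Y\<in>?I. Y - X)" using w by blast
    qed
  qed (auto simp: between_def)
  have "card (A - X) = (\<Sum>Y\<in>?I. card (Y - X))"
    unfolding cover
  proof (rule card_UN_disjoint)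
    show "finite ?I" using finite_between[OF finA(1)] .
    show "\<forall>Y\<in>?I. finite (Y - X)" by (simp add: between_def has_dim_def)
    show "\<forall>Y1\<in>?I. \<forall>Y2\<in>?I. Y1 \<noteq> Y2 \<longrightarrow> (Y1 - X) \<inter> (Y2 - X) = {}"
      using unique by blast
  qed
  also have "\<dots> = card ?I * (CARD('a) ^ Suc k - CARD('a) ^ k)"
    using X by (simp add: between_def has_dim_def card_Diff_subset finite_subset)
  finally show ?thesis
    using X A XA by (simp add: card_Diff_subset finite_subset has_dim_def)
qed

lemma card_between_Suc_real:
  fixes X :: "(nat \<Rightarrow> 'a::{finite,field}) set"
  assumes X: "has_dim X (j + m)" and A: "has_dim A (j + n)" and XA: "X \<subseteq> A" and "m \<le> n"
  shows "real (card (between X A (Suc (j + m))))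
         = (real CARD('a) ^ n - real CARD('a) ^ m) / (real CARD('a) ^ Suc m - real CARD('a) ^ m)"
proof -
  let ?q = "real CARD('a)" and ?k = "j + m"
  have nat_eq: "card (between X A (Suc ?k)) * (CARD('a) ^ Suc ?k - CARD('a) ^ ?k)
                = CARD('a) ^ (j + n) - CARD('a) ^ ?k"
    using card_between_Suc[OF X A XA] .
  have q1: "1 \<le> CARD('a)" using one_less_card_field[where 'a='a] by simp
  have "CARD('a) ^ ?k \<le> CARD('a) ^ Suc ?k" "CARD('a) ^ ?k \<le> CARD('a) ^ (j + n)"
    using \<open>m \<le> n\<close> q1 by (auto intro!: power_increasing)
  then have "real (card (between X A (Suc ?k))) * (?q ^ Suc ?k - ?q ^ ?k) = ?q ^ (j + n) - ?q ^ ?k"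
    using arg_cong[OF nat_eq, of real] by simp
  moreover have "?q ^ Suc ?k = ?q ^ j * ?q ^ Suc m" "?q ^ ?k = ?q ^ j * ?q ^ m"
    "?q ^ (j + n) = ?q ^ j * ?q ^ n"
    by (simp_all only: power_add add_Suc_right[symmetric])
  ultimately have "?q ^ j * (real (card (between X A (Suc ?k))) * (?q ^ Suc m - ?q ^ m))
                   = ?q ^ j * (?q ^ n - ?q ^ m)"
    by (simp only: mult.left_commute right_diff_distrib)
  moreover have "?q ^ Suc m - ?q ^ m > 0" "?q ^ j > 0"
    using one_less_card_field[where 'a='a] by auto
  ultimately show ?thesis by (simp add: eq_divide_eq)
qed

definition gauss_binom :: "real \<Rightarrow> nat \<Rightarrow> nat \<Rightarrow> real" where
  "gauss_binom q n m = (\<Prod>i<m. q ^ n - q ^ i) / (\<Prod>i<m. q ^ m - q ^ i)"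

lemma gauss_binom_0 [simp]: "gauss_binom q n 0 = 1"
  by (simp add: gauss_binom_def)

lemma gauss_binom_pos:
  assumes "1 < q" "m \<le> n"
  shows "0 < gauss_binom q n m"
  unfolding gauss_binom_def using assms
  by (intro divide_pos_pos prod_pos) (auto intro: power_strict_increasing)

lemma gauss_binom_eqI:
  assumes "1 < q" and "v * (\<Prod>i<m. q ^ m - q ^ i) = (\<Prod>i<m. q ^ n - q ^ i)"
  shows "gauss_binom q n m = v"
proof -
  have "(\<Prod>i<m. q ^ m - q ^ i) > 0"
    using assms(1) by (intro prod_pos) (auto intro: power_strict_increasing)
  then show ?thesis
    unfolding gauss_binom_def assms(2)[symmetric] by (metis less_irrefl nonzero_mult_div_cancel_right)
qed

lemma gauss_binom_Suc:
  assumes "1 < q"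
  shows "gauss_binom q n m * ((q ^ n - q ^ m) / (q ^ Suc m - q ^ m))
       = gauss_binom q n (Suc m) * gauss_binom q (Suc m) m"
proof -
  have nonzero: "(\<Prod>i<m. q ^ k - q ^ i) \<noteq> 0" if "m \<le> k" for k
    using assms that by (intro prod_pos[THEN less_imp_neq, symmetric]) (auto intro: power_strict_increasing)
  have "q ^ Suc m - q ^ m \<noteq> 0" using assms by simp
  with nonzero[of m] nonzero[of "Suc m"] show ?thesis
    unfolding gauss_binom_def prod.lessThan_Suc by (simp add: divide_simps del: power_Suc)
qed

lemma gauss_binom_Suc_Suc:
  assumes "1 < q"
  shows "gauss_binom q (Suc n) (Suc m) * (q ^ Suc m - 1) = gauss_binom q n m * (q ^ Suc n - 1)"
proof -
  have shift: "(\<Prod>i<m. q ^ Suc k - q ^ Suc i) = q ^ m * (\<Prod>i<m. q ^ k - q ^ i)" for k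
  proof -
    have "(\<Prod>i<m. q ^ Suc k - q ^ Suc i) = (\<Prod>i<m. q * (q ^ k - q ^ i))"
      by (simp add: right_diff_distrib)
    then show ?thesis by (simp add: prod.distrib)
  qed
  have "(\<Prod>i<m. q ^ m - q ^ i) \<noteq> 0"
    using assms by (intro prod_pos[THEN less_imp_neq, symmetric]) (auto intro: power_strict_increasing)
  moreover have "q ^ Suc m > 1" using assms by (rule one_less_power) simp
  moreover have "q \<noteq> 0" using assms by simp
  ultimately show ?thesis
    unfolding gauss_binom_def prod.lessThan_Suc_shift shift
    by (simp add: divide_simps del: power_Suc)
qed
theorem card_between:
  fixes U :: "(nat \<Rightarrow> 'a::{finite,field}) set"
  assumes U: "has_dim U j" and "m \<le> n" "has_dim A (j + n)" "U \<subseteq> A"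
  shows "real (card (between U A (j + m))) = gauss_binom CARD('a) n m"
  using assms(2-)
proof (induction m arbitrary: A n)
  case 0
  then show ?case using between_self[OF U] by simp
next
  case (Suc m)
  let ?q = "real CARD('a)" and ?k = "j + m"
  let ?I = "between U A ?k" and ?J = "between U A (Suc ?k)"
  have finA: "finite A" using Suc.prems by (simp add: has_dim_def)
  have up: "real (card {Y \<in> ?J. X \<subseteq> Y}) = (?q ^ n - ?q ^ m) / (?q ^ Suc m - ?q ^ m)"
    if X: "X \<in> ?I" for X
  proof -
    have "{Y \<in> ?J. X \<subseteq> Y} = between X A (Suc ?k)" using X by (auto simp: between_def)
    then show ?thesis using card_between_Suc_real[of X j m A n] X Suc.prems by (simp add: between_def)
  qed
  have down: "real (card {X \<in> ?I. X \<subseteq> Y}) = gauss_binom ?q (Suc m) m" if "Y \<in> ?J" for Y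
  proof -
    have "{X \<in> ?I. X \<subseteq> Y} = between U Y ?k" using that by (auto simp: between_def)
    then show ?thesis using Suc.IH[of "Suc m" Y] that by (simp add: between_def)
  qed
  have swap: "(\<Sum>X\<in>?I. card {Y \<in> ?J. X \<subseteq> Y}) = (\<Sum>Y\<in>?J. card {X \<in> ?I. X \<subseteq> Y})"
    by (rule sum_card_filter_swap[OF finite_between[OF finA] finite_between[OF finA]])
  have "(\<Sum>X\<in>?I. real (card {Y \<in> ?J. X \<subseteq> Y})) = (\<Sum>Y\<in>?J. real (card {X \<in> ?I. X \<subseteq> Y}))"
    using arg_cong[OF swap, of real] unfolding of_nat_sum .
  then have "real (card ?I) * ((?q ^ n - ?q ^ m) / (?q ^ Suc m - ?q ^ m))
             = real (card ?J) * gauss_binom ?q (Suc m) m"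
    using up down by simp
  moreover have "real (card ?I) = gauss_binom ?q n m"
    using Suc.IH[of n A] Suc.prems by simp
  moreover have "gauss_binom ?q n m * ((?q ^ n - ?q ^ m) / (?q ^ Suc m - ?q ^ m))
                 = gauss_binom ?q n (Suc m) * gauss_binom ?q (Suc m) m"
    using gauss_binom_Suc one_less_card_field[where 'a='a] by simp
  ultimately have "gauss_binom ?q n (Suc m) * gauss_binom ?q (Suc m) m
                   = real (card ?J) * gauss_binom ?q (Suc m) m"
    by metis
  moreover have "gauss_binom ?q (Suc m) m > 0"
    using gauss_binom_pos one_less_card_field[where 'a='a] by simp
  ultimately show ?case by simp
qed

corollary card_between_eq:
  fixes U :: "(nat \<Rightarrow> 'a::{finite,field}) set"
  assumes "has_dim U j" "has_dim A a" "U \<subseteq> A" "j \<le> k" "k \<le> a"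
    and "gauss_binom CARD('a) (a - j) (k - j) = real v"
  shows "card (between U A k) = v"
  using card_between[OF assms(1), of "k - j" "a - j" A] assms by simp

lemma gauss_binom_values:
  assumes "1 < q"
  shows "gauss_binom q 2 1 = q + 1"
    and "gauss_binom q 3 1 = q^2 + q + 1"
    and "gauss_binom q 3 2 = q^2 + q + 1"
    and "gauss_binom q 4 1 = (q^2 + 1) * (q + 1)"
    and "gauss_binom q 4 2 = (q^2 + 1) * (q^2 + q + 1)"
    and "gauss_binom q 4 3 = (q^2 + 1) * (q + 1)"
    and "gauss_binom q 5 4 = q^4 + q^3 + q^2 + q + 1"
  by (rule gauss_binom_eqI[OF assms]; simp add: lessThan_nat_numeral; algebra)+

lemma one_less_real_card: "1 < real CARD('a::{finite,field})"
  using one_less_card_field[where 'a='a] by simp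

lemma card_points_of_line:
  fixes l :: "(nat \<Rightarrow> 'a::{finite,field}) set"
  assumes "has_dim l 2"
  shows "card (points_of l) = CARD('a) + 1"
  using card_between_eq[OF has_dim_zero assms _ _ _, of 1 "CARD('a) + 1"]
    gauss_binom_values(1)[OF one_less_real_card[where 'a='a]]
    has_dim_imp_zero[OF assms] by (simp add: algebra_simps)

lemma card_points_of_solid:
  fixes S :: "(nat \<Rightarrow> 'a::{finite,field}) set"
  assumes "has_dim S 4"
  shows "card (points_of S) = (CARD('a)^2 + 1) * (CARD('a) + 1)"
  using card_between_eq[OF has_dim_zero assms _ _ _, of 1 "(CARD('a)^2 + 1) * (CARD('a) + 1)"]
    gauss_binom_values(4)[OF one_less_real_card[where 'a='a]]
    has_dim_imp_zero[OF assms] by (simp add: algebra_simps)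

lemma card_lines_of_solid:
  fixes S :: "(nat \<Rightarrow> 'a::{finite,field}) set"
  assumes "has_dim S 4"
  shows "card (lines_of S) = (CARD('a)^2 + 1) * (CARD('a)^2 + CARD('a) + 1)"
  using card_between_eq[OF has_dim_zero assms _ _ _, of 2 "(CARD('a)^2 + 1) * (CARD('a)^2 + CARD('a) + 1)"]
    gauss_binom_values(5)[OF one_less_real_card[where 'a='a]]
    has_dim_imp_zero[OF assms] by (simp add: algebra_simps)

lemma card_planes_of_solid:
  fixes S :: "(nat \<Rightarrow> 'a::{finite,field}) set"
  assumes "has_dim S 4"
  shows "card (planes_of S) = (CARD('a)^2 + 1) * (CARD('a) + 1)"
  using card_between_eq[OF has_dim_zero assms _ _ _, of 3 "(CARD('a)^2 + 1) * (CARD('a) + 1)"]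
    gauss_binom_values(6)[OF one_less_real_card[where 'a='a]]
    has_dim_imp_zero[OF assms] by (simp add: algebra_simps)

lemma card_solids_of_pg4:
  fixes W :: "(nat \<Rightarrow> 'a::{finite,field}) set"
  assumes "has_dim W 5"
  shows "card (solids_of W) = CARD('a)^4 + CARD('a)^3 + CARD('a)^2 + CARD('a) + 1"
  using card_between_eq[OF has_dim_zero assms _ _ _, of 4 "CARD('a)^4 + CARD('a)^3 + CARD('a)^2 + CARD('a) + 1"]
    gauss_binom_values(7)[OF one_less_real_card[where 'a='a]]
    has_dim_imp_zero[OF assms] by (simp add: algebra_simps)

lemma card_lines_through_point_in_solid:
  fixes P :: "(nat \<Rightarrow> 'a::{finite,field}) set"
  assumes "has_dim P 1" "has_dim S 4" "P \<subseteq> S"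
  shows "card (between P S 2) = CARD('a)^2 + CARD('a) + 1"
  using card_between_eq[OF assms, of 2 "CARD('a)^2 + CARD('a) + 1"]
    gauss_binom_values(2)[OF one_less_real_card[where 'a='a]]
  by simp

lemma card_planes_through_line_in_solid:
  fixes L :: "(nat \<Rightarrow> 'a::{finite,field}) set"
  assumes "has_dim L 2" "has_dim S 4" "L \<subseteq> S"
  shows "card (between L S 3) = CARD('a) + 1"
  using card_between_eq[OF assms, of 3 "CARD('a) + 1"]
    gauss_binom_values(1)[OF one_less_real_card[where 'a='a]]
  by simp

lemma card_planes_through_line_in_pg4:
  fixes L :: "(nat \<Rightarrow> 'a::{finite,field}) set"
  assumes "has_dim L 2" "has_dim W 5" "L \<subseteq> W"
  shows "card (between L W 3) = CARD('a)^2 + CARD('a) + 1"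
  using card_between_eq[OF assms, of 3 "CARD('a)^2 + CARD('a) + 1"]
    gauss_binom_values(2)[OF one_less_real_card[where 'a='a]]
  by simp

lemma card_solids_through_line_in_pg4:
  fixes L :: "(nat \<Rightarrow> 'a::{finite,field}) set"
  assumes "has_dim L 2" "has_dim W 5" "L \<subseteq> W"
  shows "card (between L W 4) = CARD('a)^2 + CARD('a) + 1"
  using card_between_eq[OF assms, of 4 "CARD('a)^2 + CARD('a) + 1"]
    gauss_binom_values(3)[OF one_less_real_card[where 'a='a]]
  by simp

lemma lines_of_plane_nonempty:
  fixes P :: "(nat \<Rightarrow> 'a::{finite,field}) set"
  assumes "has_dim P 3"
  shows "lines_of P \<noteq> {}"
proof -
  have "card (lines_of P) = CARD('a)^2 + CARD('a) + 1"
    using card_between_eq[OF has_dim_zero assms _ _ _, of 2 "CARD('a)^2 + CARD('a) + 1"]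
      gauss_binom_values(3)[OF one_less_real_card[where 'a='a]] has_dim_imp_zero[OF assms]
    by simp
  then show ?thesis by auto
qed

section \<open>Blocking sets of PG(4,q)\<close>

lemma no_spread_arith:
  fixes b q :: nat
  assumes "(q^4 + q^3 + q^2 + q + 1) * (q^2 + 2) \<le> b * (q^2 + q + 1)"
  shows "q^4 + 2*q^2 + q + 1 \<le> b"
proof (rule ccontr)
  assume "\<not> ?thesis"
  then have "b \<le> q^4 + 2*q^2 + q" by simp
  then have "b * (q^2 + q + 1) \<le> (q^4 + 2*q^2 + q) * (q^2 + q + 1)" by (rule mult_right_mono) simp
  moreover have "(q^4 + 2*q^2 + q) * (q^2 + q + 1) + (q + 2) = (q^4 + q^3 + q^2 + q + 1) * (q^2 + 2)"
    by (simp add: algebra_simps power2_eq_square power3_eq_cube power4_eq_xxxx)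
  ultimately show False using assms by linarith
qed

locale pg4_blocking =
  fixes W :: "(nat \<Rightarrow> 'a::{finite,field}) set" and B :: "(nat \<Rightarrow> 'a) set set"
  assumes dim_W: "has_dim W 5"
    and B_lines: "B \<subseteq> lines_of W"
    and blocking: "\<And>P. P \<in> planes_of W \<Longrightarrow> \<exists>L\<in>B. L \<subseteq> P"
begin

definition B_in :: "(nat \<Rightarrow> 'a) set \<Rightarrow> (nat \<Rightarrow> 'a) set set" where
  "B_in X = {L \<in> B. L \<subseteq> X}"

lemma B_line: "L \<in> B \<Longrightarrow> has_dim L 2 \<and> L \<subseteq> W"
  using B_lines mem_between_zero by blast

lemma finite_B: "finite B"
  using finite_subset[OF B_lines finite_between[OF has_dim_finite[OF dim_W]]] .

lemma finite_B_in: "finite (B_in X)"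
  using finite_B by (simp add: B_in_def)

lemma card_B_in_plane_ge_1:
  assumes "P \<in> planes_of W"
  shows "1 \<le> card (B_in P)"
  using blocking[OF assms] finite_B_in[of P] by (auto simp: B_in_def Suc_le_eq card_gt_0_iff)

lemma planes_through_line_eq:
  "has_dim L 2 \<Longrightarrow> L \<subseteq> S \<Longrightarrow> {P \<in> planes_of S. L \<subseteq> P} = between L S 3"
  using has_dim_imp_zero by (fastforce simp: between_def)

lemma solid_double_count:
  assumes S: "S \<in> solids_of W"
  shows "card (B_in S) * (CARD('a) + 1) = (\<Sum>P\<in>planes_of S. card (B_in P))"
proof -
  have S4: "has_dim S 4" using S by (simp add: mem_between_zero)
  have "(\<Sum>L\<in>B_in S. card {P \<in> planes_of S. L \<subseteq> P}) = (\<Sum>P\<in>planes_of S. card {L \<in> B_in S. L \<subseteq> P})"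
    by (rule sum_card_filter_swap[OF finite_B_in finite_between[OF has_dim_finite[OF S4]]])
  moreover have "card {P \<in> planes_of S. L \<subseteq> P} = CARD('a) + 1" if "L \<in> B_in S" for L
  proof -
    have L: "has_dim L 2" "L \<subseteq> S" using that B_line by (auto simp: B_in_def)
    then show ?thesis
      using card_planes_through_line_in_solid[OF L(1) S4 L(2)] planes_through_line_eq[OF L] by simp
  qed
  moreover have "{L \<in> B_in S. L \<subseteq> P} = B_in P" if "P \<in> planes_of S" for P
    using that by (auto simp: B_in_def between_def)
  ultimately show ?thesis by simp
qed

lemma planes_of_solid_subset: "S \<in> solids_of W \<Longrightarrow> planes_of S \<subseteq> planes_of W"
  by (auto simp: between_def)

lemma card_B_in_solid_ge:
  assumes S: "S \<in> solids_of W"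
  shows "CARD('a)^2 + 1 \<le> card (B_in S)"
proof -
  have "has_dim S 4" using S by (simp add: mem_between_zero)
  then have "(CARD('a)^2 + 1) * (CARD('a) + 1) = (\<Sum>P\<in>planes_of S. 1)"
    using card_planes_of_solid[of S] by simp
  also have "\<dots> \<le> (\<Sum>P\<in>planes_of S. card (B_in P))"
    using card_B_in_plane_ge_1 planes_of_solid_subset[OF S] by (intro sum_mono) blast
  also have "\<dots> = card (B_in S) * (CARD('a) + 1)"
    using solid_double_count[OF S] by simp
  finally show ?thesis by (simp only: mult_le_cancel2)
qed

lemma card_B_in_plane_eq_1:
  assumes S: "S \<in> solids_of W" and min: "card (B_in S) = CARD('a)^2 + 1" and P: "P \<in> planes_of S"
  shows "card (B_in P) = 1"
proof -
  have ge1: "\<And>P. P \<in> planes_of S \<Longrightarrow> 1 \<le> card (B_in P)"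
    using card_B_in_plane_ge_1 planes_of_solid_subset[OF S] by blast
  have S4: "has_dim S 4" using S by (simp add: mem_between_zero)
  have fin: "finite (planes_of S)" using finite_between[OF has_dim_finite[OF S4]] .
  have "(\<Sum>P\<in>planes_of S. card (B_in P)) = (\<Sum>P\<in>planes_of S. 1)"
    using solid_double_count[OF S] card_planes_of_solid[OF S4] min by simp
  moreover have "(\<Sum>P\<in>planes_of S. card (B_in P) - 1)
                 = (\<Sum>P\<in>planes_of S. card (B_in P)) - (\<Sum>P\<in>planes_of S. 1)"
    using ge1 by (rule sum_subtractf_nat)
  ultimately have "(\<Sum>P\<in>planes_of S. card (B_in P) - 1) = 0" by simp
  then have "card (B_in P) - 1 = 0" using fin P by simp
  then show ?thesis using ge1[OF P] by simp
qed

lemma sum_card_B_in_solids: "(\<Sum>S\<in>solids_of W. card (B_in S)) = card B * (CARD('a)^2 + CARD('a) + 1)"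
proof -
  have "(\<Sum>L\<in>B. card {S \<in> solids_of W. L \<subseteq> S}) = (\<Sum>S\<in>solids_of W. card {L \<in> B. L \<subseteq> S})"
    by (rule sum_card_filter_swap[OF finite_B finite_between[OF has_dim_finite[OF dim_W]]])
  moreover have "card {S \<in> solids_of W. L \<subseteq> S} = CARD('a)^2 + CARD('a) + 1" if "L \<in> B" for L
  proof -
    have L: "has_dim L 2" "L \<subseteq> W" using that B_line by auto
    then have "{S \<in> solids_of W. L \<subseteq> S} = between L W 4"
      using has_dim_imp_zero by (fastforce simp: between_def)
    then show ?thesis using card_solids_through_line_in_pg4[OF L(1) dim_W L(2)] by simp
  qed
  ultimately show ?thesis by (simp add: B_in_def)
qed

lemma card_B_ge_without_spread:
  assumes "\<And>S. S \<in> solids_of W \<Longrightarrow> CARD('a)^2 + 2 \<le> card (B_in S)"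
  shows "CARD('a)^4 + 2*CARD('a)^2 + CARD('a) + 1 \<le> card B"
proof (rule no_spread_arith)
  have "(CARD('a)^4 + CARD('a)^3 + CARD('a)^2 + CARD('a) + 1) * (CARD('a)^2 + 2) = (\<Sum>S\<in>solids_of W. CARD('a)^2 + 2)"
    using card_solids_of_pg4[OF dim_W] by simp
  also have "\<dots> \<le> (\<Sum>S\<in>solids_of W. card (B_in S))"
    using assms by (rule sum_mono)
  finally show "(CARD('a)^4 + CARD('a)^3 + CARD('a)^2 + CARD('a) + 1) * (CARD('a)^2 + 2) \<le> card B * (CARD('a)^2 + CARD('a) + 1)"
    using sum_card_B_in_solids by simp
qed

end

section \<open>A solid whose blocking lines form a spread\<close>

text \<open>In the next four lemmas T stands for the number of outer lines, R for the degree of a spread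
  line and e, r for excesses and degrees as in point_identity and spread_line_identity below.\<close>

lemma light_line_arith:
  fixes q T e R :: int
  assumes q: "2 \<le> q" and e: "0 \<le> e" and R: "R \<le> q^2 - 1"
    and eq: "(q + 1) * ((q^2 + q) * q^2) + e + (q + 1) * R = (q^2 + q) * R + (q + 1) * T"
  shows "q^4 + q^2 + q - 1 \<le> T"
    and "T = q^4 + q^2 + q - 1 \<Longrightarrow> e = 0 \<and> R = q^2 - 1"
proof -
  have key: "e + (q^2 - 1) * (q^2 - 1 - R) + (q + 1) * (q^4 + q^2 + q - 1) = (q + 1) * T"
    using eq by algebra
  have "2^2 \<le> q^2" using power_mono[OF q, of 2] by simp
  then have q2: "0 < q^2 - 1" by simp
  have slack: "0 \<le> (q^2 - 1) * (q^2 - 1 - R)" using q2 R by (intro mult_nonneg_nonneg) auto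
  then have "(q + 1) * (q^4 + q^2 + q - 1) \<le> (q + 1) * T" using key e by linarith
  then show "q^4 + q^2 + q - 1 \<le> T" using q by simp
  assume "T = q^4 + q^2 + q - 1"
  then have "e + (q^2 - 1) * (q^2 - 1 - R) = 0" using key by simp
  then have "e = 0" "(q^2 - 1) * (q^2 - 1 - R) = 0" using e slack by linarith+
  then show "e = 0 \<and> R = q^2 - 1" using q2 by simp
qed

lemma heavy_point_arith:
  fixes q T e R r :: int
  assumes q: "2 \<le> q" and e: "0 \<le> e" and R: "q^2 \<le> R" and T: "T < q^4 + q^2 + q"
    and eq: "(q^2 + q) * q^2 + e + R = (q^2 + q) * r + T"
  shows "T + q^2 \<le> e + R + q^4"
proof -
  have pos: "0 < q^2 + q" using q by (smt (verit) zero_less_power)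
  have "(q^2 + q) * (q - 1) < (q^2 + q) * r"
    using eq e R T by (simp add: algebra_simps power2_eq_square power3_eq_cube power4_eq_xxxx)
  then have "q \<le> r" using pos by (simp add: mult_less_cancel_left_pos)
  then have "(q^2 + q) * q \<le> (q^2 + q) * r" using pos by simp
  then show ?thesis using eq by (simp add: algebra_simps power2_eq_square power3_eq_cube power4_eq_xxxx)
qed

lemma heavy_line_arith:
  fixes q T e R :: int
  assumes q: "2 \<le> q"
    and eq: "(q + 1) * ((q^2 + q) * q^2) + e + (q + 1) * R = (q^2 + q) * R + (q + 1) * T"
    and ge: "(q + 1) * (T + q^2) \<le> e + (q + 1) * R + (q + 1) * q^4"
  shows "q^2 + q \<le> R"
proof -
  have pos: "0 < q^2 + q" using q by (smt (verit) zero_less_power)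
  have "(q^2 + q) * R = e + (q + 1) * R + (q + 1) * q^4 - (q + 1) * (T + q^2) + (q^2 + q) * (q^2 + q)"
    using eq by algebra
  then have "(q^2 + q) * (q^2 + q) \<le> (q^2 + q) * R" using ge by linarith
  then show ?thesis using pos by (simp add: mult_le_cancel_left_pos)
qed

lemma few_heavy_arith:
  fixes q h n :: nat
  assumes q: "2 \<le> q" and hn: "n + h = q^2 + 1"
    and le: "n * (q^2 - 1) + h * (q^2 + q) + 1 \<le> q^4 + q^2 + q"
  shows "h \<le> q"
proof -
  let ?q = "int q" and ?h = "int h"
  have "int (n * (q^2 - 1) + h * (q^2 + q) + 1) \<le> int (q^4 + q^2 + q)"
    using le by (simp only: of_nat_le_iff)
  moreover have "1 \<le> q^2" using q by simp
  moreover have "int n = ?q^2 + 1 - ?h" using arg_cong[OF hn, of int] by simp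
  ultimately have "(?q^2 + 1 - ?h) * (?q^2 - 1) + ?h * (?q^2 + ?q) + 1 \<le> ?q^4 + ?q^2 + ?q"
    by simp
  moreover have "(?q^2 + 1 - ?h) * (?q^2 - 1) + ?h * (?q^2 + ?q) = ?q^4 - 1 + ?h * (?q + 1)"
    by algebra
  ultimately have "?h * (?q + 1) \<le> ?q * (?q + 1)" by (simp add: algebra_simps power2_eq_square)
  then show ?thesis by (simp add: mult_le_cancel_right)
qed

locale pg4_blocking_spread = pg4_blocking +
  fixes S :: "(nat \<Rightarrow> 'a) set"
  assumes S_solid: "S \<in> solids_of W"
    and card_B_in_S: "card (B_in S) = CARD('a)^2 + 1"
begin

abbreviation spread :: "(nat \<Rightarrow> 'a) set set" where
  "spread \<equiv> B_in S"

lemma dim_S: "has_dim S 4" and S_subset_W: "S \<subseteq> W"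
  using S_solid by (simp_all add: mem_between_zero)

lemma finite_S: "finite S"
  using has_dim_finite[OF dim_S] .

lemma spread_lineD: "s \<in> spread \<Longrightarrow> has_dim s 2 \<and> s \<subseteq> S"
  using B_line by (auto simp: B_in_def)

lemma unique_B_line_in_plane:
  assumes "has_dim P 3" "P \<subseteq> S" "L1 \<in> B" "L2 \<in> B" "L1 \<subseteq> P" "L2 \<subseteq> P"
  shows "L1 = L2"
proof -
  have "P \<in> planes_of S" using assms(1,2) by (simp add: mem_between_zero)
  then have "card (B_in P) = 1" using card_B_in_plane_eq_1[OF S_solid card_B_in_S] by blast
  then obtain L where "B_in P = {L}" by (rule card_1_singletonE)
  moreover have "L1 \<in> B_in P" "L2 \<in> B_in P" using assms(3-6) by (simp_all add: B_in_def)
  ultimately show ?thesis by simp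
qed

text \<open>Two lines of B in S through a common point would span a plane of S containing two lines of B.\<close>

lemma spread_lines_disjoint:
  assumes s: "s1 \<in> spread" "s2 \<in> spread" "s1 \<noteq> s2" and P: "has_dim P 1" "P \<subseteq> s1" "P \<subseteq> s2"
  shows False
proof -
  have s1: "has_dim s1 2" "s1 \<subseteq> S" and s2: "has_dim s2 2" "s2 \<subseteq> S"
    using spread_lineD s by auto
  obtain c where c: "has_dim (s1 \<inter> s2) c" using has_dim_Int[OF s1(1) s2(1)] .
  have "1 \<le> c" using has_dim_mono[OF P(1) c] P by blast
  moreover have "c \<le> 2" using has_dim_mono[OF c s1(1)] by blast
  moreover have "c \<noteq> 2"
  proof
    assume "c = 2"
    then have "s1 \<inter> s2 = s1" "s1 \<inter> s2 = s2" using has_dim_subset_eq c s1(1) s2(1) by blast+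
    then show False using s(3) by simp
  qed
  ultimately have "c = 1" by simp
  then have "has_dim (s1 + s2) 3" using has_dim_plus[OF s1(1) s2(1) c] by simp
  moreover have "s1 + s2 \<subseteq> S" using plus_subset_subspace[OF has_dim_subspace[OF dim_S] s1(2) s2(2)] .
  moreover have "s1 \<subseteq> s1 + s2" "s2 \<subseteq> s1 + s2"
    using subset_plus_left[OF has_dim_subspace[OF s2(1)]] subset_plus_right[OF has_dim_subspace[OF s1(1)]] .
  ultimately show False using unique_B_line_in_plane s by (auto simp: B_in_def)
qed

text \<open>The q^2 + 1 pairwise disjoint lines of the spread cover (q^2 + 1)(q + 1) points, i.e. all of S.\<close>

lemma spread_covers:
  assumes P: "P \<in> points_of S"
  shows "\<exists>s\<in>spread. P \<subseteq> s"
proof -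
  let ?U = "\<Union>s\<in>spread. points_of s"
  have sub: "?U \<subseteq> points_of S" using spread_lineD by (auto simp: between_def)
  have "card ?U = (\<Sum>s\<in>spread. card (points_of s))"
  proof (rule card_UN_disjoint[OF finite_B_in])
    show "\<forall>s\<in>spread. finite (points_of s)"
      using spread_lineD by (blast intro: finite_between has_dim_finite)
    show "\<forall>s1\<in>spread. \<forall>s2\<in>spread. s1 \<noteq> s2 \<longrightarrow> points_of s1 \<inter> points_of s2 = {}"
      using spread_lines_disjoint by (fastforce simp: mem_between_zero)
  qed
  also have "\<dots> = (\<Sum>s\<in>spread. CARD('a) + 1)"
    using spread_lineD card_points_of_line by (intro sum.cong) blast+
  also have "\<dots> = card (points_of S)"
    using card_B_in_S card_points_of_solid[OF dim_S] by simp
  finally have "?U = points_of S"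
    using card_subset_eq[OF finite_between[OF finite_S] sub] by simp
  then have "P \<in> ?U" using P by simp
  then show ?thesis by (auto simp: mem_between_zero)
qed

definition spread_line_of :: "(nat \<Rightarrow> 'a) set \<Rightarrow> (nat \<Rightarrow> 'a) set" where
  "spread_line_of P = (THE s. s \<in> spread \<and> P \<subseteq> s)"

lemma spread_line_of_eq:
  assumes "P \<in> points_of S" "s \<in> spread" "P \<subseteq> s"
  shows "spread_line_of P = s"
  unfolding spread_line_of_def
proof (rule the_equality)
  show "s \<in> spread \<and> P \<subseteq> s" using assms(2,3) by blast
  show "s' = s" if "s' \<in> spread \<and> P \<subseteq> s'" for s'
    using spread_lines_disjoint[of s' s P] that assms by (auto simp: mem_between_zero)
qed

lemma spread_line_of:
  assumes "P \<in> points_of S"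
  shows "spread_line_of P \<in> spread" "P \<subseteq> spread_line_of P"
  using spread_covers[OF assms] spread_line_of_eq[OF assms] by auto

definition outer :: "(nat \<Rightarrow> 'a) set set" where
  "outer = {L \<in> B. \<not> L \<subseteq> S}"

definition outer_deg :: "(nat \<Rightarrow> 'a) set \<Rightarrow> nat" where
  "outer_deg P = card {L \<in> outer. P \<subseteq> L}"

definition line_deg :: "(nat \<Rightarrow> 'a) set \<Rightarrow> nat" where
  "line_deg l = (\<Sum>Q\<in>points_of l. outer_deg Q)"

lemma finite_outer: "finite outer"
  using finite_B by (simp add: outer_def)

lemma card_B_eq: "card B = card spread + card outer"
proof -
  have "B = spread \<union> outer" "spread \<inter> outer = {}" by (auto simp: B_in_def outer_def)
  then show ?thesis using finite_B_in finite_outer card_Un_disjoint by metis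
qed

lemma outer_Int_S:
  assumes "L \<in> outer"
  shows "has_dim (L \<inter> S) 1"
proof (rule has_dim_Int_hyperplane)
  show "has_dim W (Suc 4)" using dim_W by simp
  show "has_dim L (Suc 1)" "L \<subseteq> W" "\<not> L \<subseteq> S"
    using assms B_line by (auto simp: outer_def numeral_2_eq_2)
qed (use dim_S S_subset_W in auto)

lemma outer_point:
  assumes L: "L \<in> outer" and P: "P \<in> points_of S" "P \<subseteq> L"
  shows "P = L \<inter> S"
  using has_dim_subset_eq[OF _ outer_Int_S[OF L], of P] P by (auto simp: mem_between_zero)

lemma card_outer_eq_sum: "card outer = (\<Sum>P\<in>points_of S. outer_deg P)"
proof -
  have "(\<Sum>P\<in>points_of S. outer_deg P) = (\<Sum>L\<in>outer. card {P \<in> points_of S. P \<subseteq> L})"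
    unfolding outer_deg_def by (rule sum_card_filter_swap[OF finite_between[OF finite_S] finite_outer])
  also have "\<dots> = (\<Sum>L\<in>outer. 1)"
  proof (rule sum.cong)
    fix L assume L: "L \<in> outer"
    then have "{P \<in> points_of S. P \<subseteq> L} = {L \<inter> S}"
      using outer_point[OF L] outer_Int_S[OF L] by (auto simp: mem_between_zero)
    then show "card {P \<in> points_of S. P \<subseteq> L} = 1" by simp
  qed simp
  finally show ?thesis by simp
qed

lemma points_of_subset: "l \<subseteq> S \<Longrightarrow> points_of l = {Q \<in> points_of S. Q \<subseteq> l}"
  by (auto simp: between_def)

lemma sum_line_deg_swap:
  assumes "A \<subseteq> lines_of S" "finite A"
  shows "(\<Sum>l\<in>A. line_deg l) = (\<Sum>Q\<in>points_of S. card {l \<in> A. Q \<subseteq> l} * outer_deg Q)"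
proof -
  have "(\<Sum>l\<in>A. line_deg l) = (\<Sum>l\<in>A. \<Sum>Q\<in>{Q \<in> points_of S. Q \<subseteq> l}. outer_deg Q)"
    unfolding line_deg_def
  proof (rule sum.cong[OF refl])
    fix l assume "l \<in> A"
    then have "l \<subseteq> S" using assms(1) mem_between_zero by blast
    show "(\<Sum>Q\<in>points_of l. outer_deg Q) = (\<Sum>Q\<in>{Q \<in> points_of S. Q \<subseteq> l}. outer_deg Q)"
      unfolding points_of_subset[OF \<open>l \<subseteq> S\<close>] by (rule refl)
  qed
  also have "\<dots> = (\<Sum>Q\<in>points_of S. card {l \<in> A. Q \<subseteq> l} * outer_deg Q)"
    using sum.swap_restrict[OF assms(2) finite_between[OF finite_S],
        where g = "\<lambda>_ Q. outer_deg Q" and R = "\<lambda>l Q. Q \<subseteq> l"] by simp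
  finally show ?thesis .
qed

definition outer_planes :: "(nat \<Rightarrow> 'a) set \<Rightarrow> (nat \<Rightarrow> 'a) set set" where
  "outer_planes l = {P \<in> between l W 3. \<not> P \<subseteq> S}"

definition excess :: "(nat \<Rightarrow> 'a) set \<Rightarrow> nat" where
  "excess l = (\<Sum>P\<in>outer_planes l. card (B_in P) - 1)"

lemma finite_outer_planes: "finite (outer_planes l)"
  using finite_between[OF has_dim_finite[OF dim_W]] by (simp add: outer_planes_def)

lemma card_outer_planes:
  assumes l: "l \<in> lines_of S"
  shows "card (outer_planes l) = CARD('a)^2"
proof -
  have l2: "has_dim l 2" "l \<subseteq> S" using l by (auto simp: mem_between_zero)
  have "outer_planes l = between l W 3 - between l S 3"
    using S_subset_W by (auto simp: outer_planes_def between_def)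
  moreover have "between l S 3 \<subseteq> between l W 3"
    using S_subset_W by (auto simp: between_def)
  ultimately show ?thesis
    using card_Diff_subset[OF finite_between[OF finite_S]]
      card_planes_through_line_in_pg4[OF l2(1) dim_W] card_planes_through_line_in_solid[OF l2(1) dim_S l2(2)]
      l2 S_subset_W by (simp add: power2_eq_square)
qed

text \<open>A plane through l outside S meets S exactly in l.\<close>

lemma B_line_in_outer_plane:
  assumes l: "l \<in> lines_of S" "l \<notin> spread" and P: "P \<in> outer_planes l" and L: "L \<in> B" "L \<subseteq> P"
  shows "L \<in> outer \<and> L \<inter> S \<subseteq> l"
proof -
  have l2: "has_dim l 2" "l \<subseteq> S" using l(1) by (auto simp: mem_between_zero)
  have P3: "has_dim P (Suc 2)" "l \<subseteq> P" "P \<subseteq> W" "\<not> P \<subseteq> S"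
    using P by (auto simp: outer_planes_def between_def)
  have "has_dim (P \<inter> S) 2"
    using has_dim_Int_hyperplane[of W 4 S P 2] dim_W dim_S S_subset_W P3 by simp
  then have PS: "P \<inter> S = l" using has_dim_subset_eq[OF l2(1)] l2(2) P3(2) by blast
  have "\<not> L \<subseteq> S"
  proof
    assume "L \<subseteq> S"
    then have "L = l" using has_dim_subset_eq[of L 2 l] B_line[OF L(1)] l2(1) L(2) PS by blast
    then show False using l(2) L(1) l2(2) by (simp add: B_in_def)
  qed
  then show ?thesis using L PS by (auto simp: outer_def)
qed

lemma outer_plane_of_outer_line:
  assumes l: "l \<in> lines_of S" and L: "L \<in> outer" "L \<inter> S \<subseteq> l"
  shows "L + l \<in> outer_planes l" "L \<subseteq> L + l"
    and "\<And>P. P \<in> outer_planes l \<Longrightarrow> L \<subseteq> P \<Longrightarrow> P = L + l"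
proof -
  have l2: "has_dim l 2" "l \<subseteq> S" using l by (auto simp: mem_between_zero)
  have L2: "has_dim L 2" "L \<subseteq> W" "\<not> L \<subseteq> S" using L B_line by (auto simp: outer_def)
  have "L \<inter> l = L \<inter> S" using L(2) l2(2) by blast
  then have "has_dim (L \<inter> l) 1" using outer_Int_S[OF L(1)] by simp
  then have "has_dim (L + l) 3" using has_dim_plus[OF L2(1) l2(1), of 1] by simp
  moreover have "l \<subseteq> L + l" using subset_plus_right[OF has_dim_subspace[OF L2(1)]] .
  moreover show Ll: "L \<subseteq> L + l" using subset_plus_left[OF has_dim_subspace[OF l2(1)]] .
  moreover have "L + l \<subseteq> W"
    using plus_subset_subspace[OF has_dim_subspace[OF dim_W] L2(2)] l2(2) S_subset_W by blast
  ultimately show "L + l \<in> outer_planes l" using L2(3) by (auto simp: outer_planes_def between_def)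
  fix P assume "P \<in> outer_planes l" "L \<subseteq> P"
  then show "P = L + l"
    using subspace_eq_plus[OF \<open>has_dim (L + l) 3\<close>] by (auto simp: outer_planes_def between_def)
qed

lemma line_deg_eq_card:
  assumes l: "l \<in> lines_of S"
  shows "line_deg l = card {L \<in> outer. L \<inter> S \<subseteq> l}"
proof -
  have l2: "has_dim l 2" "l \<subseteq> S" using l by (auto simp: mem_between_zero)
  have "line_deg l = (\<Sum>L\<in>outer. card {Q \<in> points_of l. Q \<subseteq> L})"
    unfolding line_deg_def outer_deg_def
    by (rule sum_card_filter_swap[OF finite_between[OF has_dim_finite[OF l2(1)]] finite_outer])
  also have "\<dots> = (\<Sum>L\<in>outer. if L \<inter> S \<subseteq> l then 1 else 0)"
  proof (rule sum.cong)
    fix L assume L: "L \<in> outer"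
    have "{Q \<in> points_of l. Q \<subseteq> L} = (if L \<inter> S \<subseteq> l then {L \<inter> S} else {})"
      using outer_point[OF L] outer_Int_S[OF L] l2(2) by (auto simp: mem_between_zero)
    then show "card {Q \<in> points_of l. Q \<subseteq> L} = (if L \<inter> S \<subseteq> l then 1 else 0)" by simp
  qed simp
  also have "\<dots> = card {L \<in> outer. L \<inter> S \<subseteq> l}"
    using sum.inter_filter[OF finite_outer, of "\<lambda>_. 1::nat"] by simp
  finally show ?thesis .
qed

lemma sum_B_in_outer_planes:
  assumes l: "l \<in> lines_of S" "l \<notin> spread"
  shows "(\<Sum>P\<in>outer_planes l. card (B_in P)) = card {L \<in> outer. L \<inter> S \<subseteq> l}"
proof -
  have "(\<Sum>P\<in>outer_planes l. card (B_in P)) = (\<Sum>L\<in>B. card {P \<in> outer_planes l. L \<subseteq> P})"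
    unfolding B_in_def by (rule sum_card_filter_swap[OF finite_outer_planes finite_B])
  also have "\<dots> = (\<Sum>L\<in>B. if L \<in> outer \<and> L \<inter> S \<subseteq> l then 1 else 0)"
  proof (rule sum.cong)
    fix L assume L: "L \<in> B"
    show "card {P \<in> outer_planes l. L \<subseteq> P} = (if L \<in> outer \<and> L \<inter> S \<subseteq> l then 1 else 0)"
    proof (cases "L \<in> outer \<and> L \<inter> S \<subseteq> l")
      case True
      then have "{P \<in> outer_planes l. L \<subseteq> P} = {L + l}"
        using outer_plane_of_outer_line[OF l(1)] by blast
      then show ?thesis using True by simp
    next
      case False
      then have "{P \<in> outer_planes l. L \<subseteq> P} = {}" using B_line_in_outer_plane[OF l _ L] by blast
      then have "card {P \<in> outer_planes l. L \<subseteq> P} = 0" by (simp only: card.empty)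
      then show ?thesis using False by simp
    qed
  qed simp
  also have "\<dots> = card {L \<in> outer. L \<inter> S \<subseteq> l}"
    using sum.inter_filter[OF finite_B, of "\<lambda>_. 1::nat"] by (simp add: outer_def)
  finally show ?thesis .
qed

lemma line_deg_nonspread:
  assumes l: "l \<in> lines_of S" "l \<notin> spread"
  shows "line_deg l = CARD('a)^2 + excess l"
proof -
  have "\<And>P. P \<in> outer_planes l \<Longrightarrow> P \<in> planes_of W"
    by (auto simp: outer_planes_def between_def dest: has_dim_imp_zero)
  then have ge1: "\<And>P. P \<in> outer_planes l \<Longrightarrow> 1 \<le> card (B_in P)"
    using card_B_in_plane_ge_1 by blast
  have "(\<Sum>P\<in>outer_planes l. card (B_in P)) = (\<Sum>P\<in>outer_planes l. (card (B_in P) - 1) + 1)"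
    by (intro sum.cong refl) (metis ge1 le_add_diff_inverse2)
  also have "\<dots> = excess l + CARD('a)^2"
    unfolding sum.distrib excess_def using card_outer_planes[OF l(1)] by simp
  finally show ?thesis
    using line_deg_eq_card[OF l(1)] sum_B_in_outer_planes[OF l] by simp
qed

definition nonspread :: "(nat \<Rightarrow> 'a) set set" where
  "nonspread = lines_of S - spread"

definition nonspread_through :: "(nat \<Rightarrow> 'a) set \<Rightarrow> (nat \<Rightarrow> 'a) set set" where
  "nonspread_through P = {l \<in> nonspread. P \<subseteq> l}"

definition point_excess :: "(nat \<Rightarrow> 'a) set \<Rightarrow> nat" where
  "point_excess P = (\<Sum>l\<in>nonspread_through P. excess l)"

definition line_excess :: "(nat \<Rightarrow> 'a) set \<Rightarrow> nat" where
  "line_excess s = (\<Sum>P\<in>points_of s. point_excess P)"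

lemma finite_nonspread: "finite nonspread"
  using finite_between[OF finite_S] by (simp add: nonspread_def)

lemma finite_nonspread_through: "finite (nonspread_through P)"
  using finite_nonspread by (simp add: nonspread_through_def)

lemma spread_subset_lines: "spread \<subseteq> lines_of S"
  using spread_lineD by (auto simp: mem_between_zero)

lemma card_nonspread: "card nonspread = (CARD('a)^2 + 1) * (CARD('a)^2 + CARD('a))"
proof -
  have "card nonspread = (CARD('a)^2 + 1) * (CARD('a)^2 + CARD('a) + 1) - (CARD('a)^2 + 1)"
    unfolding nonspread_def
    using card_Diff_subset[OF finite_subset[OF spread_subset_lines finite_between[OF finite_S]]
        spread_subset_lines] card_lines_of_solid[OF dim_S] card_B_in_S by simp
  then show ?thesis by (simp add: algebra_simps)
qed

lemma lines_through_point_eq: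
  assumes P: "P \<in> points_of S"
  shows "between P S 2 = insert (spread_line_of P) (nonspread_through P)"
    and "spread_line_of P \<notin> nonspread_through P"
proof -
  have spread_iff: "l \<in> spread \<longleftrightarrow> l = spread_line_of P" if "P \<subseteq> l" for l
    using spread_line_of[OF P] spread_line_of_eq[OF P _ that] by blast
  show "between P S 2 = insert (spread_line_of P) (nonspread_through P)"
    unfolding nonspread_through_def nonspread_def using spread_iff spread_line_of[OF P] spread_lineD
    by (auto simp: between_def dest: has_dim_imp_zero)
  show "spread_line_of P \<notin> nonspread_through P"
    using spread_line_of(1)[OF P] by (simp add: nonspread_through_def nonspread_def)
qed

lemma card_nonspread_through:
  assumes P: "P \<in> points_of S"
  shows "card (nonspread_through P) = CARD('a)^2 + CARD('a)"
proof -
  have P1: "has_dim P 1" "P \<subseteq> S" using P by (auto simp: mem_between_zero)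
  show ?thesis
    using card_lines_through_point_in_solid[OF P1(1) dim_S P1(2)] lines_through_point_eq[OF P]
      finite_nonspread_through[of P] by simp
qed

lemma card_lines_through_two_points:
  assumes P: "P \<in> points_of S" and Q: "Q \<in> points_of S"
  shows "card {l \<in> between P S 2. Q \<subseteq> l} = (if Q = P then CARD('a)^2 + CARD('a) + 1 else 1)"
proof (cases "Q = P")
  case True
  have "has_dim P 1" "P \<subseteq> S" using P by (auto simp: mem_between_zero)
  moreover have "{l \<in> between P S 2. Q \<subseteq> l} = between P S 2" using True by (auto simp: between_def)
  ultimately show ?thesis using True card_lines_through_point_in_solid[OF _ dim_S] by simp
next
  case False
  note PQ = line_through_points[OF P Q False[symmetric] has_dim_subspace[OF dim_S]]
  have "{l \<in> between P S 2. Q \<subseteq> l} = {P + Q}"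
  proof (intro equalityI subsetI)
    fix l assume "l \<in> {l \<in> between P S 2. Q \<subseteq> l}"
    then show "l \<in> {P + Q}" using subspace_eq_plus[of P Q 2 l] PQ by (auto simp: between_def mem_between_zero)
  qed (use PQ in \<open>auto simp: between_def mem_between_zero\<close>)
  then show ?thesis using False by simp
qed

lemma sum_line_deg_through_point:
  assumes P: "P \<in> points_of S"
  shows "(\<Sum>l\<in>between P S 2. line_deg l) = (CARD('a)^2 + CARD('a)) * outer_deg P + card outer"
proof -
  have "between P S 2 \<subseteq> lines_of S" by (auto simp: between_def dest: has_dim_imp_zero)
  then have "(\<Sum>l\<in>between P S 2. line_deg l)
             = (\<Sum>Q\<in>points_of S. card {l \<in> between P S 2. Q \<subseteq> l} * outer_deg Q)"
    using finite_between[OF finite_S] by (rule sum_line_deg_swap)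
  also have "\<dots> = (\<Sum>Q\<in>points_of S. outer_deg Q + (if Q = P then (CARD('a)^2 + CARD('a)) * outer_deg Q else 0))"
    using card_lines_through_two_points[OF P] by (intro sum.cong) auto
  also have "\<dots> = card outer + (CARD('a)^2 + CARD('a)) * outer_deg P"
    unfolding sum.distrib card_outer_eq_sum using P finite_between[OF finite_S] by simp
  finally show ?thesis by simp
qed

lemma nonspreadD: "l \<in> nonspread \<Longrightarrow> l \<in> lines_of S \<and> l \<notin> spread \<and> l \<subseteq> S"
  by (simp add: nonspread_def mem_between_zero)

lemma point_identity:
  assumes P: "P \<in> points_of S"
  shows "(CARD('a)^2 + CARD('a)) * CARD('a)^2 + point_excess P + line_deg (spread_line_of P)
         = (CARD('a)^2 + CARD('a)) * outer_deg P + card outer"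
proof -
  have "(\<Sum>l\<in>nonspread_through P. line_deg l) = (\<Sum>l\<in>nonspread_through P. CARD('a)^2 + excess l)"
    using line_deg_nonspread nonspreadD by (simp add: nonspread_through_def)
  also have "\<dots> = (CARD('a)^2 + CARD('a)) * CARD('a)^2 + point_excess P"
    unfolding sum.distrib point_excess_def using card_nonspread_through[OF P] by simp
  moreover have "(\<Sum>l\<in>between P S 2. line_deg l)
                 = line_deg (spread_line_of P) + (\<Sum>l\<in>nonspread_through P. line_deg l)"
    using lines_through_point_eq[OF P] finite_nonspread_through by simp
  ultimately show ?thesis using sum_line_deg_through_point[OF P] by simp
qed

lemma nonspread_identity:
  "card nonspread * CARD('a)^2 + (\<Sum>l\<in>nonspread. excess l) = (CARD('a)^2 + CARD('a)) * card outer"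
proof -
  have "card nonspread * CARD('a)^2 + (\<Sum>l\<in>nonspread. excess l) = (\<Sum>l\<in>nonspread. line_deg l)"
    using line_deg_nonspread nonspreadD by (simp add: sum.distrib)
  also have "\<dots> = (\<Sum>Q\<in>points_of S. card {l \<in> nonspread. Q \<subseteq> l} * outer_deg Q)"
    using nonspreadD finite_nonspread by (intro sum_line_deg_swap) auto
  also have "\<dots> = (\<Sum>Q\<in>points_of S. (CARD('a)^2 + CARD('a)) * outer_deg Q)"
    using card_nonspread_through by (simp add: nonspread_through_def)
  finally show ?thesis by (simp add: card_outer_eq_sum sum_distrib_left)
qed

lemma card_outer_eq_sum_line_deg: "card outer = (\<Sum>s\<in>spread. line_deg s)"
proof -
  have "(\<Sum>s\<in>spread. line_deg s) = (\<Sum>Q\<in>points_of S. card {s \<in> spread. Q \<subseteq> s} * outer_deg Q)"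
    using spread_subset_lines finite_B_in by (rule sum_line_deg_swap)
  also have "\<dots> = (\<Sum>Q\<in>points_of S. outer_deg Q)"
  proof (rule sum.cong[OF refl])
    fix Q assume Q: "Q \<in> points_of S"
    then have "{s \<in> spread. Q \<subseteq> s} = {spread_line_of Q}"
      using spread_line_of[OF Q] spread_line_of_eq[OF Q] by blast
    then show "card {s \<in> spread. Q \<subseteq> s} * outer_deg Q = outer_deg Q" by simp
  qed
  finally show ?thesis by (simp add: card_outer_eq_sum)
qed

lemma spread_line_identity:
  assumes s: "s \<in> spread"
  shows "(CARD('a) + 1) * ((CARD('a)^2 + CARD('a)) * CARD('a)^2) + line_excess s + (CARD('a) + 1) * line_deg s
         = (CARD('a)^2 + CARD('a)) * line_deg s + (CARD('a) + 1) * card outer"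
proof -
  have s2: "has_dim s 2" "s \<subseteq> S" using spread_lineD[OF s] by auto
  have points: "P \<in> points_of S" "spread_line_of P = s" if "P \<in> points_of s" for P
    using that s2(2) spread_line_of_eq[OF _ s] by (auto simp: mem_between_zero)
  have "(\<Sum>P\<in>points_of s. (CARD('a)^2 + CARD('a)) * CARD('a)^2 + point_excess P + line_deg s)
        = (\<Sum>P\<in>points_of s. (CARD('a)^2 + CARD('a)) * outer_deg P + card outer)"
    using point_identity points by (intro sum.cong) auto
  then show ?thesis
    using card_points_of_line[OF s2(1)]
    by (simp add: sum.distrib line_excess_def line_deg_def sum_distrib_left)
qed

lemma line_excess_pos:
  assumes l: "l \<in> nonspread" "0 < excess l" and P: "P \<in> points_of l"
  shows "0 < line_excess (spread_line_of P)"
proof -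
  have PS: "P \<in> points_of S" using P nonspreadD[OF l(1)] by (auto simp: mem_between_zero)
  have "l \<in> nonspread_through P" using l(1) P by (simp add: nonspread_through_def mem_between_zero)
  then have "excess l \<le> point_excess P"
    unfolding point_excess_def by (rule member_le_sum[OF _ _ finite_nonspread_through]) simp
  moreover have "P \<in> points_of (spread_line_of P)"
    using spread_line_of[OF PS] PS by (simp add: mem_between_zero)
  then have "point_excess P \<le> line_excess (spread_line_of P)"
    unfolding line_excess_def
    using spread_line_of(1)[OF PS] spread_lineD by (intro member_le_sum finite_between has_dim_finite) auto
  ultimately show ?thesis using l(2) by simp
qed

lemma inj_on_spread_line_of:
  assumes l: "l \<in> nonspread"
  shows "inj_on spread_line_of (points_of l)"
proof (rule inj_onI)
  fix P Q assume P: "P \<in> points_of l" and Q: "Q \<in> points_of l" and eq: "spread_line_of P = spread_line_of Q"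
  show "P = Q"
  proof (rule ccontr)
    assume "P \<noteq> Q"
    have l2: "l \<in> lines_of S" "l \<notin> spread" "l \<subseteq> S" using nonspreadD[OF l] by auto
    have PS: "P \<in> points_of S" and QS: "Q \<in> points_of S" using P Q l2(3) by (auto simp: mem_between_zero)
    note PQ = line_through_points[OF PS QS \<open>P \<noteq> Q\<close> has_dim_subspace[OF dim_S]]
    have "l = P + Q" "spread_line_of P = P + Q"
      using subspace_eq_plus[of P Q 2] PQ(1) P Q l2(1) spread_line_of[OF PS] spread_line_of[OF QS] eq
        spread_lineD by (auto simp: mem_between_zero)
    then show False using spread_line_of(1)[OF PS] l2(2) by simp
  qed
qed

lemma sum_excess_nonspread:
  "(\<Sum>l\<in>nonspread. excess l) = (CARD('a)^2 + CARD('a)) * (card outer - (CARD('a)^2 + 1) * CARD('a)^2)"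
proof -
  have "(CARD('a)^2 + CARD('a)) * ((CARD('a)^2 + 1) * CARD('a)^2) + (\<Sum>l\<in>nonspread. excess l)
        = (CARD('a)^2 + CARD('a)) * card outer"
    using nonspread_identity card_nonspread by (simp add: algebra_simps)
  then show ?thesis by (simp add: diff_mult_distrib2)
qed

lemma card_outer_ge_split:
  assumes "H \<subseteq> spread" "\<And>s. s \<in> H \<Longrightarrow> a \<le> line_deg s" "\<And>s. s \<in> spread - H \<Longrightarrow> b \<le> line_deg s"
  shows "card (spread - H) * b + card H * a \<le> card outer"
proof -
  have "(\<Sum>s\<in>spread - H. b) + (\<Sum>s\<in>H. a) \<le> card outer"
    unfolding card_outer_eq_sum_line_deg sum.subset_diff[OF assms(1) finite_B_in]
    using assms(2,3) by (intro add_mono sum_mono) auto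
  then show ?thesis by simp
qed

lemma spread_line_identity_int:
  assumes "s \<in> spread"
  shows "(int CARD('a) + 1) * ((int CARD('a)^2 + int CARD('a)) * int CARD('a)^2) + int (line_excess s)
           + (int CARD('a) + 1) * int (line_deg s)
         = (int CARD('a)^2 + int CARD('a)) * int (line_deg s) + (int CARD('a) + 1) * int (card outer)"
  using arg_cong[OF spread_line_identity[OF assms], of int]
  by (simp only: of_nat_add of_nat_mult of_nat_power of_nat_1)

lemma light_spread_line:
  assumes s: "s \<in> spread" and light: "line_deg s < CARD('a)^2"
  shows "CARD('a)^4 + CARD('a)^2 + CARD('a) \<le> card outer + 1"
    and "card outer + 1 = CARD('a)^4 + CARD('a)^2 + CARD('a) \<Longrightarrow> line_excess s = 0 \<and> line_deg s + 1 = CARD('a)^2"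
proof -
  have q: "2 \<le> int CARD('a)" using one_less_card_field[where 'a='a] by simp
  have R: "int (line_deg s) \<le> int CARD('a)^2 - 1" using light by (simp flip: of_nat_power)
  note arith = light_line_arith[OF q _ R spread_line_identity_int[OF s]]
  have "int (CARD('a)^4 + CARD('a)^2 + CARD('a)) \<le> int (card outer + 1)" using arith(1) by simp
  then show "CARD('a)^4 + CARD('a)^2 + CARD('a) \<le> card outer + 1" by (simp only: of_nat_le_iff)
  assume "card outer + 1 = CARD('a)^4 + CARD('a)^2 + CARD('a)"
  then have "int (card outer) = int CARD('a)^4 + int CARD('a)^2 + int CARD('a) - 1"
    by (simp flip: of_nat_power)
  then show "line_excess s = 0 \<and> line_deg s + 1 = CARD('a)^2"
    using arith(2) by (simp flip: of_nat_power)
qed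

lemma heavy_spread_line:
  assumes s: "s \<in> spread" and heavy: "CARD('a)^2 \<le> line_deg s"
  shows "CARD('a)^2 + CARD('a) \<le> line_deg s \<or> CARD('a)^4 + CARD('a)^2 + CARD('a) \<le> card outer"
proof (rule disjCI)
  let ?q = "int CARD('a)" and ?T = "int (card outer)" and ?R = "int (line_deg s)"
  assume "\<not> CARD('a)^4 + CARD('a)^2 + CARD('a) \<le> card outer"
  then have T: "?T < ?q^4 + ?q^2 + ?q" by (simp flip: of_nat_power)
  have q: "2 \<le> ?q" using one_less_card_field[where 'a='a] by simp
  have R: "?q^2 \<le> ?R" using heavy by (simp flip: of_nat_power)
  have s2: "has_dim s 2" "s \<subseteq> S" using spread_lineD[OF s] by auto
  have "?T + ?q^2 \<le> int (point_excess P) + ?R + ?q^4" if P: "P \<in> points_of s" for P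
  proof -
    have PS: "P \<in> points_of S" using P s2(2) by (auto simp: mem_between_zero)
    have "spread_line_of P = s" using spread_line_of_eq[OF PS s] P by (simp add: mem_between_zero)
    then show ?thesis
      using heavy_point_arith[OF q _ R T] arg_cong[OF point_identity[OF PS], of int]
      by (simp only: of_nat_add of_nat_mult of_nat_power of_nat_0_le_iff)
  qed
  then have "(\<Sum>P\<in>points_of s. ?T + ?q^2) \<le> (\<Sum>P\<in>points_of s. int (point_excess P) + ?R + ?q^4)"
    by (rule sum_mono)
  then have "(?q + 1) * (?T + ?q^2) \<le> int (line_excess s) + (?q + 1) * ?R + (?q + 1) * ?q^4"
    using card_points_of_line[OF s2(1)] by (simp add: sum.distrib line_excess_def algebra_simps)
  then show "CARD('a)^2 + CARD('a) \<le> line_deg s"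
    using heavy_line_arith[OF q spread_line_identity_int[OF s]] by (simp flip: of_nat_power)
qed

lemma card_positive_excess_spread_lines:
  assumes l: "l \<in> nonspread" "0 < excess l"
  shows "CARD('a) + 1 \<le> card {s \<in> spread. 0 < line_excess s}"
proof -
  have "spread_line_of ` points_of l \<subseteq> {s \<in> spread. 0 < line_excess s}"
    using line_excess_pos[OF l] spread_line_of(1) nonspreadD[OF l(1)]
    by (auto simp: mem_between_zero)
  then have "card (points_of l) \<le> card {s \<in> spread. 0 < line_excess s}"
    using card_inj_on_le[OF inj_on_spread_line_of[OF l(1)]] finite_B_in by auto
  then show ?thesis using card_points_of_line[of l] nonspreadD[OF l(1)] by (simp add: mem_between_zero)
qed

text \<open>If |outer| were q^4 + q^2 + q - 1, the total excess (q^2 + q)(q - 1) would be positive, so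
  some nonspread line has positive excess, and the q + 1 spread lines through its points would have
  positive excess and hence degree at least q^2 + q. But |outer| is the sum of the degrees of the
  q^2 + 1 spread lines, which leaves room for at most q of them.\<close>

lemma card_outer_ne: "card outer + 1 \<noteq> CARD('a)^4 + CARD('a)^2 + CARD('a)"
proof
  let ?q = "CARD('a)" and ?H = "{s \<in> spread. CARD('a)^2 \<le> line_deg s}"
  assume T: "card outer + 1 = ?q^4 + ?q^2 + ?q"
  have q2: "2 \<le> ?q" using one_less_card_field[where 'a='a] by simp
  have heavy: "?q^2 + ?q \<le> line_deg s" if "s \<in> ?H" for s
    using heavy_spread_line[of s] that T by auto
  have light: "line_excess s = 0 \<and> line_deg s + 1 = ?q^2" if "s \<in> spread - ?H" for s
    using light_spread_line(2)[OF _ _ T] that by auto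
  have fin_H: "finite ?H" and H_sub: "?H \<subseteq> spread" using finite_B_in by auto
  have "card outer - (?q^2 + 1) * ?q^2 = ?q - 1"
    using T by (simp add: distrib_right power4_eq_xxxx power2_eq_square)
  then have "0 < (\<Sum>l\<in>nonspread. excess l)" using sum_excess_nonspread q2 by simp
  then obtain l where "l \<in> nonspread" "0 < excess l" by (metis not_gr0 sum.neutral)
  then have "?q + 1 \<le> card {s \<in> spread. 0 < line_excess s}" by (rule card_positive_excess_spread_lines)
  also have "\<dots> \<le> card ?H"
  proof (rule card_mono[OF fin_H], rule subsetI)
    fix s assume s: "s \<in> {s \<in> spread. 0 < line_excess s}"
    show "s \<in> ?H"
    proof (rule ccontr)
      assume "s \<notin> ?H"
      then show False using light[of s] s by simp
    qed
  qed
  finally have many: "?q + 1 \<le> card ?H" .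
  have "card (spread - ?H) * (?q^2 - 1) + card ?H * (?q^2 + ?q) \<le> card outer"
  proof (rule card_outer_ge_split[OF H_sub heavy])
    fix s assume "s \<in> spread - ?H"
    then show "?q^2 - 1 \<le> line_deg s" using light[of s] by linarith
  qed
  moreover have "card (spread - ?H) + card ?H = ?q^2 + 1"
    using card_Diff_subset[OF fin_H H_sub] card_mono[OF finite_B_in H_sub] card_B_in_S by simp
  ultimately have "card ?H \<le> ?q" using few_heavy_arith[OF q2] T by simp
  then show False using many by simp
qed

theorem card_outer_ge: "CARD('a)^4 + CARD('a)^2 + CARD('a) \<le> card outer"
proof (rule ccontr)
  let ?q = "CARD('a)"
  assume "\<not> ?thesis"
  then have small: "card outer < ?q^4 + ?q^2 + ?q" by simp
  show False
  proof (cases "\<exists>s\<in>spread. line_deg s < ?q^2")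
    case True
    then show False using light_spread_line(1) small card_outer_ne by fastforce
  next
    case False
    have "?q^2 + ?q \<le> line_deg s" if "s \<in> spread" for s
    proof -
      have "?q^2 \<le> line_deg s" using False that by (simp add: not_less)
      then show ?thesis using heavy_spread_line[OF that] small by simp
    qed
    then have "card spread * (?q^2 + ?q) \<le> card outer"
      using card_outer_ge_split[of spread "?q^2 + ?q" 0] by simp
    then have "(?q^2 + 1) * (?q^2 + ?q) \<le> card outer" using card_B_in_S by simp
    then show False using small by (simp add: algebra_simps power2_eq_square power3_eq_cube power4_eq_xxxx)
  qed
qed

corollary card_B_ge_with_spread: "CARD('a)^4 + 2 * CARD('a)^2 + CARD('a) + 1 \<le> card B"
  using card_B_eq card_B_in_S card_outer_ge by simp

end

theorem (in pg4_blocking) card_B_ge_pg4: "CARD('a)^4 + 2 * CARD('a)^2 + CARD('a) + 1 \<le> card B"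
proof (cases "\<exists>S\<in>solids_of W. card (B_in S) < CARD('a)^2 + 2")
  case True
  then obtain S where S: "S \<in> solids_of W" "card (B_in S) < CARD('a)^2 + 2" by blast
  then have "card (B_in S) = CARD('a)^2 + 1" using card_B_in_solid_ge[OF S(1)] by simp
  then interpret pg4_blocking_spread W B S using S(1) by unfold_locales
  show ?thesis by (rule card_B_ge_with_spread)
next
  case False
  then show ?thesis using card_B_ge_without_spread by (simp add: not_less)
qed

section \<open>Blocking sets of PG(n,q)\<close>

definition lin_indep :: "(nat \<Rightarrow> nat \<Rightarrow> 'a::field) \<Rightarrow> nat \<Rightarrow> bool" where
  "lin_indep v k \<longleftrightarrow> (\<forall>c. lin_comb v k c = (\<lambda>_. 0) \<longrightarrow> (\<forall>i<k. c i = 0))"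

definition coord_space :: "nat \<Rightarrow> (nat \<Rightarrow> 'a::field) set" where
  "coord_space n = {x. \<forall>j. n < j \<longrightarrow> x j = 0}"

lemma lin_comb_Suc: "lin_comb v (Suc m) c = lin_comb v m c + smul (c m) (v m)"
  by (simp add: lin_comb_def fun_eq_iff)

lemma lin_comb_cong: "(\<And>i. i < k \<Longrightarrow> c i = d i) \<Longrightarrow> lin_comb v k c = lin_comb v k d"
  by (simp add: lin_comb_def)

lemma lin_comb_fun_upd: "lin_comb (v(m := w)) m = lin_comb v m"
  by (simp add: lin_comb_def fun_eq_iff)

lemma range_lin_comb_Suc: "range (lin_comb v (Suc m)) = range (lin_comb v m) + span1 (v m)"
proof
  show "range (lin_comb v (Suc m)) \<subseteq> range (lin_comb v m) + span1 (v m)"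
    by (auto simp: lin_comb_Suc span1_def)
  show "range (lin_comb v m) + span1 (v m) \<subseteq> range (lin_comb v (Suc m))"
  proof
    fix x assume "x \<in> range (lin_comb v m) + span1 (v m)"
    then obtain c d where x: "x = lin_comb v m c + smul d (v m)"
      by (auto simp: span1_def elim!: set_plus_elim)
    have "lin_comb v m (c(m := d)) = lin_comb v m c" by (rule lin_comb_cong) simp
    then have "x = lin_comb v (Suc m) (c(m := d))" using x by (simp add: lin_comb_Suc)
    then show "x \<in> range (lin_comb v (Suc m))" by blast
  qed
qed

lemma is_subspace_range_lin_comb: "is_subspace (range (lin_comb v k))"
proof (induction k)
  case 0
  have "range (lin_comb v 0) = {0}" by (auto simp: lin_comb_def fun_eq_iff)
  then show ?case by (simp add: is_subspace_def fun_eq_iff)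
next
  case (Suc k)
  then show ?case unfolding range_lin_comb_Suc by (intro is_subspace_plus is_subspace_span1)
qed

lemma range_lin_comb_subset: "is_subspace X \<Longrightarrow> (\<And>i. i < k \<Longrightarrow> v i \<in> X) \<Longrightarrow> range (lin_comb v k) \<subseteq> X"
proof (induction k)
  case 0
  then show ?case by (auto simp: lin_comb_def fun_eq_iff is_subspaceD(1)[of X, unfolded zero_fun_def])
next
  case (Suc k)
  then show ?case unfolding range_lin_comb_Suc by (intro plus_subset_subspace span1_subset) auto
qed

lemma range_lin_comb_eq_image: "range (lin_comb v k) = lin_comb v k ` PiE {..<k} (\<lambda>_. UNIV)"
proof
  show "range (lin_comb v k) \<subseteq> lin_comb v k ` PiE {..<k} (\<lambda>_. UNIV)"
  proof
    fix x assume "x \<in> range (lin_comb v k)"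
    then obtain c where "x = lin_comb v k c" by blast
    moreover have "lin_comb v k (restrict c {..<k}) = lin_comb v k c" by (rule lin_comb_cong) simp
    moreover have "restrict c {..<k} \<in> PiE {..<k} (\<lambda>_. UNIV)" by simp
    ultimately show "x \<in> lin_comb v k ` PiE {..<k} (\<lambda>_. UNIV)" by (metis image_eqI)
  qed
qed blast

lemma lin_indep_iff_inj_on: "lin_indep v k \<longleftrightarrow> inj_on (lin_comb v k) (PiE {..<k} (\<lambda>_. UNIV))"
proof
  assume indep: "lin_indep v k"
  show "inj_on (lin_comb v k) (PiE {..<k} (\<lambda>_. UNIV))"
  proof (rule inj_onI)
    fix c d assume cd: "c \<in> PiE {..<k} (\<lambda>_. UNIV)" "d \<in> PiE {..<k} (\<lambda>_. UNIV)"
      "lin_comb v k c = lin_comb v k d"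
    then have "lin_comb v k (\<lambda>i. c i - d i) = (\<lambda>_. 0)"
      by (simp add: lin_comb_def fun_eq_iff sum_subtractf left_diff_distrib)
    then show "c = d" using indep cd(1,2) by (intro PiE_ext) (auto simp: lin_indep_def)
  qed
next
  assume inj: "inj_on (lin_comb v k) (PiE {..<k} (\<lambda>_. UNIV))"
  show "lin_indep v k" unfolding lin_indep_def
  proof (intro allI impI)
    fix c i assume "lin_comb v k c = (\<lambda>_. 0)" and i: "i < k"
    then have "lin_comb v k (restrict c {..<k}) = lin_comb v k (restrict (\<lambda>_. 0) {..<k})"
      by (simp add: lin_comb_def)
    then have "restrict c {..<k} = restrict (\<lambda>_. 0) {..<k}"
      by (rule inj_onD[OF inj]) simp_all
    then show "c i = 0" using i by (metis lessThan_iff restrict_apply')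
  qed
qed

lemma lin_indep_iff_card:
  fixes v :: "nat \<Rightarrow> nat \<Rightarrow> 'a::{finite,field}"
  shows "lin_indep v k \<longleftrightarrow> card (range (lin_comb v k)) = CARD('a) ^ k"
proof -
  let ?E = "PiE {..<k} (\<lambda>_. UNIV :: 'a set)"
  have "card ?E = CARD('a) ^ k" by (simp add: card_PiE)
  moreover have "finite ?E" by (simp add: finite_PiE)
  ultimately show ?thesis
    unfolding lin_indep_iff_inj_on range_lin_comb_eq_image using inj_on_iff_eq_card[of ?E] by simp
qed

lemma has_dim_range_lin_comb:
  fixes v :: "nat \<Rightarrow> nat \<Rightarrow> 'a::{finite,field}"
  shows "has_dim (range (lin_comb v k)) k \<longleftrightarrow> lin_indep v k"
proof -
  have "0 < CARD('a) ^ k" by simp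
  then show ?thesis using is_subspace_range_lin_comb[of v k] lin_indep_iff_card[of v k]
    by (auto simp: has_dim_def intro: card_ge_0_finite)
qed

lemma has_dim_basis:
  fixes X :: "(nat \<Rightarrow> 'a::{finite,field}) set"
  assumes X: "has_dim X k"
  obtains v where "\<And>i. i < k \<Longrightarrow> v i \<in> X" "lin_indep v k" "range (lin_comb v k) = X"
proof -
  have "\<exists>v. (\<forall>i<m. v i \<in> X) \<and> has_dim (range (lin_comb v m)) m" if "m \<le> k" for m
    using that
  proof (induction m)
    case 0
    have "range (lin_comb v 0) = {0}" for v :: "nat \<Rightarrow> nat \<Rightarrow> 'a"
      by (auto simp: lin_comb_def fun_eq_iff)
    then show ?case using has_dim_zero by auto
  next
    case (Suc m)
    then obtain v where v: "\<forall>i<m. v i \<in> X" "has_dim (range (lin_comb v m)) m" by auto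
    have sub: "range (lin_comb v m) \<subseteq> X"
      using v(1) has_dim_subspace[OF X] by (intro range_lin_comb_subset) auto
    have "range (lin_comb v m) \<noteq> X"
    proof
      assume "range (lin_comb v m) = X"
      then have "k \<le> m" using has_dim_mono[OF X v(2)] by simp
      then show False using Suc.prems by simp
    qed
    then obtain w where w: "w \<in> X" "w \<notin> range (lin_comb v m)" using sub by blast
    have "range (lin_comb (v(m := w)) (Suc m)) = range (lin_comb v m) + span1 w"
      by (simp add: range_lin_comb_Suc lin_comb_fun_upd)
    then have "has_dim (range (lin_comb (v(m := w)) (Suc m))) (Suc m)"
      using has_dim_plus_span1[OF v(2) w(2)] by simp
    moreover have "\<forall>i<Suc m. (v(m := w)) i \<in> X" using v(1) w(1) by (simp add: less_Suc_eq)
    ultimately show ?case by blast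
  qed
  then obtain v where v: "\<forall>i<k. v i \<in> X" "has_dim (range (lin_comb v k)) k" by blast
  moreover have "range (lin_comb v k) = X"
    using v has_dim_subspace[OF X] X by (intro has_dim_subset_eq range_lin_comb_subset) auto
  ultimately show ?thesis using that has_dim_range_lin_comb by blast
qed

lemma has_dim_coord_space: "has_dim (coord_space n :: (nat \<Rightarrow> 'a::{finite,field}) set) (Suc n)"
proof -
  define e :: "nat \<Rightarrow> nat \<Rightarrow> 'a" where "e = (\<lambda>i j. if j = i then 1 else 0)"
  have lc: "lin_comb e (Suc n) c = (\<lambda>j. if j < Suc n then c j else 0)" for c
    by (simp add: lin_comb_def e_def fun_eq_iff if_distrib[of "times _"] cong: if_cong)
  have "lin_indep e (Suc n)" by (auto simp: lin_indep_def lc fun_eq_iff)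
  moreover have "range (lin_comb e (Suc n)) = coord_space n"
  proof
    show "range (lin_comb e (Suc n)) \<subseteq> coord_space n" by (auto simp: lc coord_space_def)
    show "coord_space n \<subseteq> range (lin_comb e (Suc n))"
    proof
      fix x :: "nat \<Rightarrow> 'a" assume "x \<in> coord_space n"
      then have "lin_comb e (Suc n) x = x" by (auto simp: lc coord_space_def fun_eq_iff not_less)
      then show "x \<in> range (lin_comb e (Suc n))" by (metis rangeI)
    qed
  qed
  ultimately show ?thesis using has_dim_range_lin_comb by metis
qed

lemma proj_subspaces_eq:
  "proj_subspaces TYPE('a::{finite,field}) n k = between {0} (coord_space n) k"
proof (intro set_eqI iffI)
  fix X :: "(nat \<Rightarrow> 'a) set"
  assume "X \<in> proj_subspaces TYPE('a) n k"
  then obtain v where v: "\<forall>i<k. \<forall>j. n < j \<longrightarrow> v i j = 0" "lin_indep v k" "X = range (lin_comb v k)"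
    unfolding proj_subspaces_def lin_indep_def by blast
  then show "X \<in> between {0} (coord_space n) k"
    using has_dim_range_lin_comb by (auto simp: mem_between_zero coord_space_def lin_comb_def)
next
  fix X :: "(nat \<Rightarrow> 'a) set"
  assume "X \<in> between {0} (coord_space n) k"
  then have X: "has_dim X k" "X \<subseteq> coord_space n" by (auto simp: mem_between_zero)
  obtain v where v: "\<And>i. i < k \<Longrightarrow> v i \<in> X" "lin_indep v k" "range (lin_comb v k) = X"
    using has_dim_basis[OF X(1)] by blast
  have "\<forall>i<k. \<forall>j. n < j \<longrightarrow> v i j = 0" using v(1) X(2) by (auto simp: coord_space_def)
  then show "X \<in> proj_subspaces TYPE('a) n k"
    using v(2,3) unfolding proj_subspaces_def lin_indep_def by blast
qed

lemma blocking_21_iff: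
  "blocking_21 TYPE('a::{finite,field}) n B \<longleftrightarrow>
     B \<subseteq> lines_of (coord_space n) \<and> (\<forall>P\<in>planes_of (coord_space n). \<exists>L\<in>B. L \<subseteq> P)"
  unfolding blocking_21_def proj_subspaces_eq ..

lemma f_21_attained:
  obtains B where "blocking_21 TYPE('a::{finite,field}) n B" "f_21 TYPE('a) n = card B"
proof -
  have "blocking_21 TYPE('a) n (lines_of (coord_space n))"
    unfolding blocking_21_iff
  proof (intro conjI ballI subset_refl)
    fix P :: "(nat \<Rightarrow> 'a) set" assume P: "P \<in> planes_of (coord_space n)"
    then have "lines_of P \<noteq> {}" using lines_of_plane_nonempty[of P] by (simp add: mem_between_zero)
    then obtain L where "L \<in> lines_of P" by blast
    then show "\<exists>L\<in>lines_of (coord_space n). L \<subseteq> P" using P by (auto simp: mem_between_zero)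
  qed
  then have "f_21 TYPE('a) n \<in> {card B | B. blocking_21 TYPE('a) n B}"
    unfolding f_21_def by (intro Inf_nat_def1) blast
  then show ?thesis using that by blast
qed

lemma pg4_blocking_restrict:
  assumes W: "W \<in> between {0} V 5" and B: "B \<subseteq> lines_of V"
    and blocking: "\<And>P. P \<in> planes_of V \<Longrightarrow> \<exists>L\<in>B. L \<subseteq> P"
  shows "pg4_blocking W {L \<in> B. L \<subseteq> W}"
proof
  have W5: "has_dim W 5" "W \<subseteq> V" using W by (simp_all add: mem_between_zero)
  show "has_dim W 5" by (rule W5(1))
  show "{L \<in> B. L \<subseteq> W} \<subseteq> lines_of W"
  proof
    fix L assume "L \<in> {L \<in> B. L \<subseteq> W}"
    then have "L \<in> lines_of V" "L \<subseteq> W" using B by auto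
    then show "L \<in> lines_of W" by (simp add: mem_between_zero)
  qed
  fix P assume P: "P \<in> planes_of W"
  then have "P \<in> planes_of V" "P \<subseteq> W" using W5(2) by (auto simp: mem_between_zero)
  moreover obtain L where "L \<in> B" "L \<subseteq> P" using blocking calculation(1) by blast
  ultimately show "\<exists>L\<in>{L \<in> B. L \<subseteq> W}. L \<subseteq> P" by blast
qed

lemma card_blocking_set_ge:
  fixes V :: "(nat \<Rightarrow> 'a::{finite,field}) set"
  assumes V: "has_dim V N" "5 \<le> N" and B: "B \<subseteq> lines_of V"
    and blocking: "\<And>P. P \<in> planes_of V \<Longrightarrow> \<exists>L\<in>B. L \<subseteq> P"
  shows "real (CARD('a)^4 + 2 * CARD('a)^2 + CARD('a) + 1) * gauss_binom CARD('a) N 5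
         \<le> real (card B) * gauss_binom CARD('a) (N - 2) 3"
proof -
  let ?c = "CARD('a)^4 + 2 * CARD('a)^2 + CARD('a) + 1" and ?Ws = "between {0} V 5"
  have finite_B: "finite B"
    using finite_subset[OF B finite_between[OF has_dim_finite[OF V(1)]]] .
  have per_line: "real (card {W \<in> ?Ws. L \<subseteq> W}) = gauss_binom CARD('a) (N - 2) 3" if "L \<in> B" for L
  proof -
    have "L \<in> lines_of V" using B that by blast
    then have L: "has_dim L 2" "L \<subseteq> V" by (simp_all add: mem_between_zero)
    have "0 \<in> L" using has_dim_imp_zero[OF L(1)] .
    then have "{W \<in> ?Ws. L \<subseteq> W} = between L V (2 + 3)" by (auto simp: between_def)
    moreover have "2 + (N - 2) = N" using V(2) by simp
    then have "has_dim V (2 + (N - 2))" using V(1) by (simp only:)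
    ultimately show ?thesis using card_between[OF L(1), of 3 "N - 2" V] V(2) L(2) by simp
  qed
  have per_solid: "?c \<le> card {L \<in> B. L \<subseteq> W}" if "W \<in> ?Ws" for W
    using pg4_blocking.card_B_ge_pg4[OF pg4_blocking_restrict[OF that B blocking]] .
  have "real ?c * gauss_binom CARD('a) N 5 = (\<Sum>W\<in>?Ws. real ?c)"
    using card_between[OF has_dim_zero, of 5 N V] V has_dim_imp_zero[OF V(1)] by simp
  also have "\<dots> \<le> (\<Sum>W\<in>?Ws. real (card {L \<in> B. L \<subseteq> W}))"
    using per_solid by (intro sum_mono) (simp only: of_nat_le_iff)
  also have "\<dots> = (\<Sum>L\<in>B. real (card {W \<in> ?Ws. L \<subseteq> W}))"
    using arg_cong[OF sum_card_filter_swap[OF finite_B finite_between[OF has_dim_finite[OF V(1)], of "{0}" 5],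
        where R = "\<lambda>L W. L \<subseteq> W"], of real]
    unfolding of_nat_sum by (rule sym)
  also have "\<dots> = real (card B) * gauss_binom CARD('a) (N - 2) 3"
    using per_line by simp
  finally show ?thesis .
qed

lemma gauss_binom_ratio:
  assumes "1 < q"
  shows "gauss_binom q (Suc (Suc n)) 5 * ((q^5 - 1) * (q^4 - 1))
         = gauss_binom q n 3 * ((q ^ Suc (Suc n) - 1) * (q ^ Suc n - 1))"
proof -
  have step5: "gauss_binom q (Suc (Suc n)) 5 * (q^5 - 1) = gauss_binom q (Suc n) 4 * (q ^ Suc (Suc n) - 1)"
    using gauss_binom_Suc_Suc[OF assms, of "Suc n" 4] by (simp del: power_Suc)
  have step4: "gauss_binom q (Suc n) 4 * (q^4 - 1) = gauss_binom q n 3 * (q ^ Suc n - 1)"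
    using gauss_binom_Suc_Suc[OF assms, of n 3] by (simp del: power_Suc)
  have "gauss_binom q (Suc (Suc n)) 5 * ((q^5 - 1) * (q^4 - 1))
        = gauss_binom q (Suc n) 4 * (q^4 - 1) * (q ^ Suc (Suc n) - 1)"
    using step5 by (simp only: mult_ac)
  also have "\<dots> = gauss_binom q n 3 * ((q ^ Suc (Suc n) - 1) * (q ^ Suc n - 1))"
    using step4 by (simp only: mult_ac)
  finally show ?thesis .
qed

theorem f_21_ge:
  assumes "4 \<le> n"
  defines "q \<equiv> real CARD('a::{finite,field})"
  shows "(q ^ (n + 1) - 1) * (q ^ n - 1) * (q^4 + 2 * q^2 + q + 1) / ((q^5 - 1) * (q^4 - 1))
         \<le> real (f_21 TYPE('a) n)"
proof -
  let ?c = "q^4 + 2 * q^2 + q + 1" and ?D = "(q^5 - 1) * (q^4 - 1)"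
  let ?G5 = "gauss_binom q (Suc n) 5" and ?G3 = "gauss_binom q (n - 1) 3"
  obtain B where B: "blocking_21 TYPE('a) n B" "f_21 TYPE('a) n = card B"
    using f_21_attained .
  have q: "1 < q" unfolding q_def by (rule one_less_real_card)
  have "real (CARD('a)^4 + 2 * CARD('a)^2 + CARD('a) + 1) * ?G5 \<le> real (card B) * ?G3"
    using card_blocking_set_ge[OF has_dim_coord_space, of n B] B(1) assms
    by (simp add: blocking_21_iff q_def)
  then have counted: "?c * ?G5 \<le> real (card B) * ?G3" by (simp add: q_def add_ac)
  have ratio: "?G5 * ?D = ?G3 * ((q ^ (n + 1) - 1) * (q ^ n - 1))"
    using gauss_binom_ratio[OF q, of "n - 1"] assms by (simp add: Suc_diff_Suc numeral_eq_Suc)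
  have G3: "0 < ?G3" using gauss_binom_pos[OF q] assms by simp
  have D: "q^5 \<noteq> 1" "q^4 \<noteq> 1" using one_less_power[OF q, of 5] one_less_power[OF q, of 4] by auto
  have "(q ^ (n + 1) - 1) * (q ^ n - 1) * ?c / ?D = ?c * ?G5 / ?G3"
    using ratio G3 D by (simp add: divide_simps ac_simps)
  also have "\<dots> \<le> real (card B)" using counted G3 by (simp add: pos_divide_le_eq)
  finally show ?thesis using B(2) by simp
qed

section \<open>The simplified bound\<close>

text \<open>With Q = x^(n-5) both sides are quadratics in Q; the difference of the cleared forms is
  D2 Q^2 - D1 Q + D0 with D2 \<ge> D1 \<ge> 0 and D0 \<ge> 0, hence nonnegative for Q \<ge> 1.\<close>

lemma quadratic_bound:
  fixes x Q :: real
  assumes x: "2 \<le> x" and Q: "1 \<le> Q"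
  shows "Q^2 * (x^6 + 2 * x^4 + x^3 + 2 * x^2) * ((x^5 - 1) * (x^4 - 1))
         \<le> (x^6 * Q - 1) * (x^5 * Q - 1) * (x^4 + 2 * x^2 + x + 1)"
proof -
  define D2 where "D2 = x^10 + 2 * x^9 + 3 * x^8 + 3 * x^7 + x^6 - 2 * x^4 - x^3 - 2 * x^2"
  define D1 where "D1 = (x^6 + x^5) * (x^4 + 2 * x^2 + x + 1)"
  define D0 where "D0 = x^4 + 2 * x^2 + x + 1"
  have diff: "(x^6 * Q - 1) * (x^5 * Q - 1) * (x^4 + 2 * x^2 + x + 1)
      - Q^2 * (x^6 + 2 * x^4 + x^3 + 2 * x^2) * ((x^5 - 1) * (x^4 - 1))
      = (D2 - D1) * Q^2 + D1 * (Q^2 - Q) + D0"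
    unfolding D2_def D1_def D0_def by algebra
  have "8 * x^6 \<le> x^3 * x^6" using power_mono[OF x, of 3] x by (intro mult_right_mono) auto
  then have "8 * x^6 \<le> x^9" by (simp flip: power_add)
  moreover have "x^2 \<le> x^3" "x^3 \<le> x^4" "x^4 \<le> x^5" "x^5 \<le> x^6" "0 \<le> x^8" "0 \<le> x^2"
    using x by (simp_all add: power_increasing)
  moreover have "D2 - D1 = x^9 + x^8 - x^6 - x^5 - 2 * x^4 - x^3 - 2 * x^2"
    unfolding D2_def D1_def by algebra
  ultimately have "0 \<le> D2 - D1" by linarith
  moreover have "0 \<le> D1" "0 \<le> D0" using x by (simp_all add: D1_def D0_def)
  moreover have "0 \<le> Q^2 - Q" using Q by (simp add: power2_eq_square)
  ultimately have "0 \<le> (D2 - D1) * Q^2 + D1 * (Q^2 - Q) + D0" by simp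
  then show ?thesis using diff by linarith
qed

lemma simplified_bound_le:
  fixes x :: real
  assumes x: "2 \<le> x" and n: "5 \<le> n"
  shows "x ^ (2*n - 4) + 2 * x ^ (2*n - 6) + x ^ (2*n - 7) + 2 * x ^ (2*n - 8)
         \<le> (x ^ (n + 1) - 1) * (x ^ n - 1) * (x^4 + 2 * x^2 + x + 1) / ((x^5 - 1) * (x^4 - 1))"
proof -
  obtain m where m: "n = m + 5" using n by (metis add.commute le_iff_add)
  have Q: "1 \<le> x ^ m" using x by simp
  have lhs: "x ^ (2*n - 4) + 2 * x ^ (2*n - 6) + x ^ (2*n - 7) + 2 * x ^ (2*n - 8)
             = (x ^ m)^2 * (x^6 + 2 * x^4 + x^3 + 2 * x^2)"
  proof -
    have e: "2*n - 4 = m*2 + 6" "2*n - 6 = m*2 + 4" "2*n - 7 = m*2 + 3" "2*n - 8 = m*2 + 2"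
      using m by simp_all
    show ?thesis unfolding e power_add power_mult by (simp add: algebra_simps)
  qed
  have pows: "x ^ (n + 1) = x^6 * x ^ m" "x ^ n = x^5 * x ^ m"
    by (simp_all add: m power_add)
  have D: "0 < (x^5 - 1) * (x^4 - 1)" using x by simp
  show ?thesis
    unfolding lhs pows pos_le_divide_eq[OF D] using quadratic_bound[OF x Q] .
qed

theorem proposition1p8:
  fixes n :: nat
  assumes "n \<ge> 4"
  defines "q \<equiv> real (card (UNIV :: 'a set))"
  shows "real (f_21 TYPE('a::{finite,field}) n) \<ge>
           (q ^ (n + 1) - 1) * (q ^ n - 1) * (q ^ 4 + 2 * q ^ 2 + q + 1) / ((q ^ 5 - 1) * (q ^ 4 - 1))
       \<and> (n \<ge> 5 \<longrightarrow>
           real (f_21 TYPE('a) n) \<ge> q ^ (2*n - 4) + 2 * q ^ (2*n - 6) + q ^ (2*n - 7) + 2 * q ^ (2*n - 8))"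
proof -
  have bound: "(q ^ (n + 1) - 1) * (q ^ n - 1) * (q ^ 4 + 2 * q ^ 2 + q + 1) / ((q ^ 5 - 1) * (q ^ 4 - 1))
               \<le> real (f_21 TYPE('a) n)"
    using f_21_ge[OF assms(1)] unfolding q_def .
  have "2 \<le> q" unfolding q_def using one_less_card_field[where 'a='a] by simp
  then show ?thesis using bound simplified_bound_le order_trans by blast
qed

end
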